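(* Let $\mathcal{I}$ be a suitable and well-separated collection of pairwise disjoint intervals in $\mathbb{R}/2\pi\mathbb{Z}$, and let $\alpha:\mathcal{I}\to\{-1,1\}$ be a symmetric colouring with $\hat\varepsilon\in[-1,1]^{S_o}$. Then $|\hat s_\alpha(\theta)|\ge\frac{2K\sqrt{n}}{3}$ for every $\theta\in\bigcup_{I\in\mathcal{I}}I$, and $|\hat s_\alpha(\theta)|\le5K\sqrt{n}$ for every $\theta\in\mathbb{R}$.
   Context: Standing setup: $n$ is a sufficiently large positive integer, $t$ is an odd integer such that $\gamma:=(2^{t+11}+2^t-1)/n$ satisfies $2^{-43}<\gamma\le2^{-40}$. A collection $\mathcal{I}$ of pairwise disjoint intervals in $\mathbb{R}/2\pi\mathbb{Z}$ is suitable if (a) endpoints of each interval lie in $\frac{\pi}{n}\mathbb{Z}$; (b) $\mathcal{I}$ is invariant under $\theta\mapsto\pi+\theta$ and $\theta\mapsto\pi-\theta$; (c) $|\mathcal{I}|=4N$ for some integer $N\le\gamma n$. It is well-separated if moreover (d) $|I|\le6\pi/n$ for each $I\in\mathcal{I}$; (e) $d(I,J)\ge\pi/n$ for distinct $I,J\in\mathcal{I}$ (distance mod $2\pi$, infimum over points); (f) $\bigcup_{I\in\mathcal{I}}I$ is disjoint from $(\pi/2)\mathbb{Z}+[-100\pi/n,100\pi/n]$. A colouring $\alpha:\mathcal{I}\to\{-1,1\}$ is symmetric if $\alpha(I')=\alpha(I)$ whenever $I'=\pi-I$ and $\alpha(I')=-\alpha(I)$ whenever $I'=\pi+I$. Let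 $S_o:=\{1,3,\dots,2n-1\}$, $K:=2^7$, $g_\alpha(\theta):=\sum_{I\in\mathcal{I}}\alpha(I)\mathbf{1}[\theta\in I]$, $\hat\varepsilon_j:=K\sqrt{n}\int_{-\pi}^{\pi}g_\alpha(\theta)\sin(j\theta)\,d\theta$ for $j\in S_o$, and $\hat s_\alpha(\theta):=\sum_{j\in S_o}\hat\varepsilon_j\sin(j\theta)$. *)

theory Defs
  imports "HOL-Analysis.Analysis"
begin

text \<open>A closed interval of the circle R/2piZ, represented as its 2pi-periodic preimage in R:
  the points congruent mod 2pi to a point of [a,b].\<close>
definition arc :: "real \<Rightarrow> real \<Rightarrow> real set" where
  "arc a b = {\<theta>. \<exists>k::int. a \<le> \<theta> + 2 * pi * of_int k \<and> \<theta> + 2 * pi * of_int k \<le> b}"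

definition is_arc :: "real set \<Rightarrow> bool" where
  "is_arc I \<longleftrightarrow> (\<exists>a b. a < b \<and> b - a < 2 * pi \<and> I = arc a b)"

definition arc_endpoints_in :: "nat \<Rightarrow> real set \<Rightarrow> bool" where
  "arc_endpoints_in n I \<longleftrightarrow> (\<exists>a b. a < b \<and> b - a < 2 * pi \<and> I = arc a b \<and>
      (\<exists>p::int. a = of_int p * pi / real n) \<and> (\<exists>q::int. b = of_int q * pi / real n))"

definition arc_length_le :: "real \<Rightarrow> real set \<Rightarrow> bool" where
  "arc_length_le L I \<longleftrightarrow> (\<exists>a b. a < b \<and> b - a < 2 * pi \<and> I = arc a b \<and> b - a \<le> L)"

definition gamma :: "nat \<Rightarrow> int \<Rightarrow> real" where
  "gamma n t = (2 powr (real_of_int t + 11) + 2 powr (real_of_int t) - 1) / real n"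

definition suitable :: "nat \<Rightarrow> int \<Rightarrow> real set set \<Rightarrow> bool" where
  "suitable n t \<I> \<longleftrightarrow>
     finite \<I> \<and> (\<forall>I\<in>\<I>. is_arc I) \<and>
     (\<forall>I\<in>\<I>. \<forall>J\<in>\<I>. I \<noteq> J \<longrightarrow> I \<inter> J = {}) \<and>
     (\<forall>I\<in>\<I>. arc_endpoints_in n I) \<and>
     (\<forall>I\<in>\<I>. (\<lambda>\<theta>. pi + \<theta>) ` I \<in> \<I> \<and> (\<lambda>\<theta>. pi - \<theta>) ` I \<in> \<I>) \<and>
     (\<exists>N::nat. card \<I> = 4 * N \<and> real N \<le> gamma n t * real n)"

definition well_separated :: "nat \<Rightarrow> int \<Rightarrow> real set set \<Rightarrow> bool" where
  "well_separated n t \<I> \<longleftrightarrow>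
     suitable n t \<I> \<and>
     (\<forall>I\<in>\<I>. arc_length_le (6 * pi / real n) I) \<and>
     (\<forall>I\<in>\<I>. \<forall>J\<in>\<I>. I \<noteq> J \<longrightarrow> (\<forall>x\<in>I. \<forall>y\<in>J. \<bar>x - y\<bar> \<ge> pi / real n)) \<and>
     (\<forall>I\<in>\<I>. \<forall>\<theta>\<in>I. \<forall>m::int. \<bar>\<theta> - of_int m * pi / 2\<bar> > 100 * pi / real n)"

definition symmetric_colouring :: "real set set \<Rightarrow> (real set \<Rightarrow> real) \<Rightarrow> bool" where
  "symmetric_colouring \<I> \<alpha> \<longleftrightarrow>
     (\<forall>I\<in>\<I>. \<alpha> I \<in> {-1, 1}) \<and>
     (\<forall>I\<in>\<I>. \<alpha> ((\<lambda>\<theta>. pi - \<theta>) ` I) = \<alpha> I) \<and>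
     (\<forall>I\<in>\<I>. \<alpha> ((\<lambda>\<theta>. pi + \<theta>) ` I) = - \<alpha> I)"

definition S_o :: "nat \<Rightarrow> nat set" where
  "S_o n = {j. odd j \<and> 1 \<le> j \<and> j \<le> 2 * n - 1}"

definition K :: real where "K = 2 ^ 7"

definition g_col :: "real set set \<Rightarrow> (real set \<Rightarrow> real) \<Rightarrow> real \<Rightarrow> real" where
  "g_col \<I> \<alpha> \<theta> = (\<Sum>I\<in>\<I>. \<alpha> I * indicator I \<theta>)"

definition eps_hat :: "nat \<Rightarrow> real set set \<Rightarrow> (real set \<Rightarrow> real) \<Rightarrow> nat \<Rightarrow> real" where
  "eps_hat n \<I> \<alpha> j = K * sqrt (real n) * integral {-pi..pi} (\<lambda>\<theta>. g_col \<I> \<alpha> \<theta> * sin (real j * \<theta>))"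

definition s_hat :: "nat \<Rightarrow> real set set \<Rightarrow> (real set \<Rightarrow> real) \<Rightarrow> real \<Rightarrow> real" where
  "s_hat n \<I> \<alpha> \<theta> = (\<Sum>j\<in>S_o n. eps_hat n \<I> \<alpha> j * sin (real j * \<theta>))"

end

theory Submission
  imports Defs
begin

(* Let P x = (SUM k<n. sin ((2k+1) x) / (2k+1)) be the n-th partial sum of the square wave.  The sine
   coefficients of an arc [a, b] give s_hat theta = K sqrt n (F theta - F (-theta)) / 2, where
   F phi = (SUM J. alpha J * (P (b_J - phi) - P (a_J - phi))).  P is odd, 2 pi-periodic and changes sign
   under x |-> x + pi; on [0, pi/2] it lies between 0 and P (pi/(2n)) <= 1, and P x >= P (pi/n) >=
   1/3 + 1/pi once x >= pi/(2n).  Away from its jumps, integration by parts bounds the increment of P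
   over an arc [x, y] by (cot x - cot y)/(2n), so all arcs far from phi and phi + pi together contribute
   at most 2/pi, while separation leaves at most two arcs near phi (each contributing at most 1, or a
   single one containing phi, contributing at most 2) and as many near phi + pi.  Hence |F| <= 5.
   For theta in an arc I, the arcs I and pi + I both contribute at least 1/3 + 1/pi with the sign of
   alpha I and all other arcs are far, so alpha I * F theta >= 2/3; the same holds at -theta for the
   arc pi - (pi + I), whose colour is - alpha I.  Hence |F theta - F (-theta)| >= 4/3. *)

section \<open>Elementary trigonometric estimates\<close>

lemma nonneg_by_derivative_from_0:
  fixes f f' :: "real \<Rightarrow> real"
  assumes "0 \<le> x" "f 0 = 0"
    and "\<And>u. 0 \<le> u \<Longrightarrow> u \<le> x \<Longrightarrow> (f has_real_derivative f' u) (at u)"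
    and "\<And>u. 0 \<le> u \<Longrightarrow> u \<le> x \<Longrightarrow> 0 \<le> f' u"
  shows "0 \<le> f x"
proof -
  have "f 0 \<le> f x"
  proof (rule DERIV_nonneg_imp_nondecreasing[OF assms(1)])
    fix u assume "0 \<le> u" "u \<le> x"
    then show "\<exists>y. (f has_real_derivative y) (at u) \<and> 0 \<le> y" using assms(3,4) by blast
  qed
  then show ?thesis using assms(2) by simp
qed

lemma cos_ge_taylor_2:
  assumes "(x::real) \<ge> 0"
  shows "cos x \<ge> 1 - x^2/2"
proof -
  have "0 \<le> cos x - (1 - x^2/2)"
    by (rule nonneg_by_derivative_from_0[OF assms, where f = "\<lambda>u. cos u - (1 - u^2/2)" and f' = "\<lambda>u. u - sin u"])
       (auto intro!: derivative_eq_intros simp: sin_x_le_x)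
  then show ?thesis by simp
qed

lemma sin_ge_taylor_3:
  assumes "(x::real) \<ge> 0"
  shows "sin x \<ge> x - x^3/6"
proof -
  have "0 \<le> sin x - (x - x^3/6)"
    by (rule nonneg_by_derivative_from_0[OF assms, where f = "\<lambda>u. sin u - (u - u^3/6)" and f' = "\<lambda>u. cos u - (1 - u^2/2)"])
       (auto intro!: derivative_eq_intros simp: cos_ge_taylor_2)
  then show ?thesis by simp
qed

lemma cos_le_taylor_4:
  assumes "(x::real) \<ge> 0"
  shows "cos x \<le> 1 - x^2/2 + x^4/24"
proof -
  have "0 \<le> (1 - x^2/2 + x^4/24) - cos x"
    by (rule nonneg_by_derivative_from_0[OF assms, where f = "\<lambda>u. (1 - u^2/2 + u^4/24) - cos u" and f' = "\<lambda>u. sin u - (u - u^3/6)"])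
       (auto intro!: derivative_eq_intros simp: sin_ge_taylor_3)
  then show ?thesis by simp
qed

lemma sin_le_taylor_5:
  assumes "(x::real) \<ge> 0"
  shows "sin x \<le> x - x^3/6 + x^5/120"
proof -
  have "0 \<le> (x - x^3/6 + x^5/120) - sin x"
    by (rule nonneg_by_derivative_from_0[OF assms, where f = "\<lambda>u. (u - u^3/6 + u^5/120) - sin u" and f' = "\<lambda>u. (1 - u^2/2 + u^4/24) - cos u"])
       (auto intro!: derivative_eq_intros simp: cos_le_taylor_4)
  then show ?thesis by simp
qed

lemma cos_ge_taylor_6:
  assumes "(x::real) \<ge> 0"
  shows "cos x \<ge> 1 - x^2/2 + x^4/24 - x^6/720"
proof -
  have "0 \<le> cos x - (1 - x^2/2 + x^4/24 - x^6/720)"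
    by (rule nonneg_by_derivative_from_0[OF assms, where f = "\<lambda>u. cos u - (1 - u^2/2 + u^4/24 - u^6/720)" and f' = "\<lambda>u. (u - u^3/6 + u^5/120) - sin u"])
       (auto intro!: derivative_eq_intros simp: sin_le_taylor_5)
  then show ?thesis by simp
qed

lemma sin_ge_taylor_7:
  assumes "(x::real) \<ge> 0"
  shows "sin x \<ge> x - x^3/6 + x^5/120 - x^7/5040"
proof -
  have "0 \<le> sin x - (x - x^3/6 + x^5/120 - x^7/5040)"
    by (rule nonneg_by_derivative_from_0[OF assms, where f = "\<lambda>u. sin u - (u - u^3/6 + u^5/120 - u^7/5040)" and f' = "\<lambda>u. cos u - (1 - u^2/2 + u^4/24 - u^6/720)"])
       (auto intro!: derivative_eq_intros simp: cos_ge_taylor_6)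
  then show ?thesis by simp
qed

lemma sin_ge_cubic_bound:
  assumes "0 \<le> t" "t \<le> (a::real)"
  shows "sin t \<ge> t * (1 - a^2/6)"
proof -
  have "t^2 \<le> a^2" using power_mono[OF assms(2) assms(1)] by simp
  then have "t * (1 - a^2/6) \<le> t * (1 - t^2/6)" using assms by (intro mult_left_mono) auto
  also have "\<dots> = t - t^3/6" by (simp add: algebra_simps power2_eq_square power3_eq_cube)
  also have "\<dots> \<le> sin t" using sin_ge_taylor_3 assms by simp
  finally show ?thesis .
qed

lemma x_cos_le_sin:
  assumes "0 \<le> a" "a \<le> pi"
  shows "a * cos a \<le> sin a"
proof -
  have "0 \<le> sin a - a * cos a"
    by (rule nonneg_by_derivative_from_0[OF assms(1), where f = "\<lambda>t. sin t - t * cos t" and f' = "\<lambda>t. t * sin t"])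
       (use assms in \<open>auto intro!: derivative_eq_intros mult_nonneg_nonneg sin_ge_zero\<close>)
  then show ?thesis by simp
qed

lemma sign_sin_between_multiples_of_pi:
  assumes "real m * pi < y" "y < real (Suc m) * pi"
  shows "(-1)^m * sin y > 0"
proof -
  have e: "y = (y - real m * pi) + real m * pi" by simp
  have "sin y = (-1)^m * sin (y - real m * pi)"
    by (subst e, simp only: sin_add sin_npi cos_npi) simp
  moreover have "sin (y - real m * pi) > 0"
    using assms by (intro sin_gt_zero) (auto simp: algebra_simps)
  ultimately show ?thesis by (simp add: power_mult_distrib[symmetric])
qed

lemma pi_ge_31415: "31415/10000 \<le> pi"
  by (rule order_trans[OF _ pi_approx(1)]) simp

lemma pi_le_31416: "pi \<le> 31416/10000"
  by (rule order_trans[OF pi_approx(2)]) simp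

section \<open>Partial sums of the square wave\<close>

text \<open>\<open>square_wave_sum n\<close> is a partial Fourier sum of the square wave \<open>(pi/4) sgn (sin x)\<close>.\<close>

definition square_wave_sum :: "nat \<Rightarrow> real \<Rightarrow> real" where
  "square_wave_sum n x = (\<Sum>k<n. sin (real (2*k+1) * x) / real (2*k+1))"

definition odd_cos_sum :: "nat \<Rightarrow> real \<Rightarrow> real" where
  "odd_cos_sum n x = (\<Sum>k<n. cos (real (2*k+1) * x))"

lemma square_wave_sum_has_derivative:
  "(square_wave_sum n has_real_derivative odd_cos_sum n x) (at x)"
proof -
  have "((\<lambda>x. sin (c * x) / c) has_real_derivative cos (c * x)) (at x)" if "c \<noteq> 0" for c :: real
    using that by (auto intro!: derivative_eq_intros simp: field_simps)
  then show ?thesis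
    unfolding square_wave_sum_def odd_cos_sum_def by (intro DERIV_sum) simp
qed

lemma continuous_on_square_wave_sum [continuous_intros]:
  "continuous_on S f \<Longrightarrow> continuous_on S (\<lambda>x. square_wave_sum n (f x))"
proof -
  have "continuous_on UNIV (square_wave_sum n)"
    using square_wave_sum_has_derivative by (meson DERIV_isCont continuous_at_imp_continuous_on)
  then show "continuous_on S f \<Longrightarrow> ?thesis"
    using continuous_on_compose2 by blast
qed

lemma sin_times_odd_cos_sum: "2 * sin x * odd_cos_sum n x = sin (2 * real n * x)"
proof (induction n)
  case 0 then show ?case by (simp add: odd_cos_sum_def)
next
  case (Suc n)
  have "2 * sin x * cos (real (2*n+1) * x) = sin (real (2*n+1) * x + x) - sin (real (2*n+1) * x - x)"
    by (simp add: sin_add sin_diff)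
  also have "\<dots> = sin (2 * real (Suc n) * x) - sin (2 * real n * x)"
    by (simp add: algebra_simps)
  finally show ?case using Suc by (simp add: odd_cos_sum_def algebra_simps)
qed

lemma odd_cos_sum_eq: "sin x \<noteq> 0 \<Longrightarrow> odd_cos_sum n x = sin (2 * real n * x) / (2 * sin x)"
  using sin_times_odd_cos_sum[of x n] by (simp add: field_simps)

lemma square_wave_sum_0 [simp]: "square_wave_sum n 0 = 0"
  by (simp add: square_wave_sum_def)

lemma square_wave_sum_minus: "square_wave_sum n (-x) = - square_wave_sum n x"
  by (simp add: square_wave_sum_def sum_negf[symmetric])

lemma square_wave_sum_add_pi: "square_wave_sum n (x + pi) = - square_wave_sum n x"
proof -
  have "sin (real (2*k+1) * (x + pi)) = - sin (real (2*k+1) * x)" for k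
  proof -
    have "real (2*k+1) * (x + pi) = real (2*k+1) * x + real (2*k+1) * pi"
      by (simp add: algebra_simps)
    moreover have "cos (real (2*k+1) * pi) = -1" using cos_npi[of "2*k+1"] by simp
    moreover have "sin (real (2*k+1) * pi) = 0" by (rule sin_npi)
    ultimately show ?thesis by (simp add: sin_add)
  qed
  then show ?thesis by (simp add: square_wave_sum_def sum_negf[symmetric])
qed

lemma square_wave_sum_diff_pi: "square_wave_sum n (x - pi) = - square_wave_sum n x"
  using square_wave_sum_add_pi[of n "x - pi"] by simp

lemma square_wave_sum_add_2pi_int: "square_wave_sum n (x + 2 * pi * of_int m) = square_wave_sum n x"
proof -
  have "sin (real (2*k+1) * (x + 2 * pi * of_int m)) = sin (real (2*k+1) * x)" for k
  proof -
    have "real (2*k+1) * (x + 2 * pi * of_int m) = real (2*k+1) * x + 2 * pi * of_int (int (2*k+1) * m)"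
      by (simp add: algebra_simps)
    then show ?thesis by (simp only: sin_add sin_int_2pin cos_int_2pin)
  qed
  then show ?thesis by (simp add: square_wave_sum_def)
qed

section \<open>Shape of the square wave sum on a quarter period\<close>

text \<open>For \<open>m \<ge> 1\<close> the nodes \<open>m pi / (2 n)\<close> are the critical points of \<open>square_wave_sum n\<close> in \<open>(0, pi/2]\<close>.\<close>

definition lobe_node :: "nat \<Rightarrow> nat \<Rightarrow> real" where
  "lobe_node n m = real m * pi / (2 * real n)"

lemma lobe_node_mono: "a \<le> b \<Longrightarrow> lobe_node n a \<le> lobe_node n b"
  unfolding lobe_node_def by (intro divide_right_mono mult_right_mono) auto

lemma lobe_node_nonneg: "lobe_node n a \<ge> 0"
  unfolding lobe_node_def by simp

lemma lobe_node_Suc: "n > 0 \<Longrightarrow> lobe_node n (Suc m) = lobe_node n m + pi / (2 * real n)"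
  unfolding lobe_node_def by (simp add: field_simps)

lemma lobe_node_le_pi_half: "m \<le> n \<Longrightarrow> lobe_node n m \<le> pi / 2"
  unfolding lobe_node_def by (cases "n = 0") (auto simp: field_simps)

lemma odd_cos_sum_sign_on_lobe:
  assumes m: "Suc m \<le> n" and t: "lobe_node n m < t" "t < lobe_node n (Suc m)"
  shows "(-1)^m * odd_cos_sum n t > 0"
proof -
  have np: "real n > 0" using m by simp
  have "0 < t" using t(1) lobe_node_nonneg[of n m] by linarith
  moreover have "t < pi / 2" using t(2) lobe_node_le_pi_half[OF m] by linarith
  ultimately have "sin t > 0" by (intro sin_gt_zero) auto
  moreover have "real m * pi < 2 * real n * t" "2 * real n * t < real (Suc m) * pi"
    using t np by (auto simp: lobe_node_def field_simps)
  then have "(-1)^m * sin (2 * real n * t) > 0" by (rule sign_sin_between_multiples_of_pi)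
  ultimately show ?thesis by (simp add: odd_cos_sum_eq mult.assoc[symmetric] del: of_nat_Suc)
qed

lemma square_wave_sum_mono_on_lobe:
  assumes m: "Suc m \<le> n" and "lobe_node n m \<le> s" "s \<le> t" "t \<le> lobe_node n (Suc m)"
  shows "(-1)^m * square_wave_sum n s \<le> (-1)^m * square_wave_sum n t"
proof (rule DERIV_nonneg_imp_increasing_open[OF \<open>s \<le> t\<close>])
  fix x assume "s < x" "x < t"
  then have "(-1)^m * odd_cos_sum n x > 0"
    using assms by (intro odd_cos_sum_sign_on_lobe[OF m]) auto
  then show "\<exists>y. ((\<lambda>x. (-1)^m * square_wave_sum n x) has_real_derivative y) (at x) \<and> y \<ge> 0"
    by (intro exI[of _ "(-1)^m * odd_cos_sum n x"])
       (auto intro!: derivative_eq_intros square_wave_sum_has_derivative)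
qed (intro continuous_intros)

lemma square_wave_sum_between_nodes:
  assumes "Suc m \<le> n" "lobe_node n m \<le> t" "t \<le> lobe_node n (Suc m)"
  shows "min (square_wave_sum n (lobe_node n m)) (square_wave_sum n (lobe_node n (Suc m))) \<le> square_wave_sum n t"
    and "square_wave_sum n t \<le> max (square_wave_sum n (lobe_node n m)) (square_wave_sum n (lobe_node n (Suc m)))"
  using square_wave_sum_mono_on_lobe[OF assms(1) _ assms(2)] square_wave_sum_mono_on_lobe[OF assms(1) assms(2)]
    assms by (cases "even m"; force)+

lemma square_wave_sum_lobe_ends:
  "Suc m \<le> n \<Longrightarrow> (-1)^m * square_wave_sum n (lobe_node n m) \<le> (-1)^m * square_wave_sum n (lobe_node n (Suc m))"
  by (rule square_wave_sum_mono_on_lobe) (auto intro: lobe_node_mono)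

text \<open>Comparing lobe \<open>m\<close> with lobe \<open>m + 1\<close> at corresponding points: the derivative sum
  \<open>odd_cos_sum n x + odd_cos_sum n (x + pi/(2n)) = sin (2 n x) (1/(2 sin x) - 1/(2 sin (x + pi/(2n))))\<close>
  has the sign \<open>(-1)^m\<close> because \<open>1 / sin\<close> decreases on \<open>(0, pi/2)\<close>.\<close>

lemma square_wave_sum_node_step:
  assumes m: "Suc (Suc m) \<le> n"
  shows "(-1)^m * square_wave_sum n (lobe_node n m) \<le> (-1)^m * square_wave_sum n (lobe_node n (Suc (Suc m)))"
proof -
  define d where "d = pi / (2 * real n)"
  have np: "real n > 0" using m by simp
  have node: "lobe_node n (Suc k) = lobe_node n k + d" for k
    using lobe_node_Suc np unfolding d_def by simp
  let ?Q = "\<lambda>x. (-1)^m * (square_wave_sum n x + square_wave_sum n (x + d))"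
  have der: "\<exists>y. (?Q has_real_derivative y) (at x) \<and> y \<ge> 0"
    if x: "lobe_node n m < x" "x < lobe_node n (Suc m)" for x
  proof -
    have x0: "x > 0" using x lobe_node_nonneg[of n m] by linarith
    have "x + d < lobe_node n (Suc (Suc m))" using x node by simp
    then have xd: "x + d < pi / 2" using lobe_node_le_pi_half[OF m] by linarith
    have dpos: "d > 0" unfolding d_def using np by simp
    have s1: "sin x > 0" using x0 xd dpos by (intro sin_gt_zero) auto
    have s12: "sin x \<le> sin (x + d)" using x0 xd dpos by (intro sin_monotone_2pi_le) auto
    have "2 * real n * (x + d) = 2 * real n * x + pi" unfolding d_def using np by (simp add: field_simps)
    then have "odd_cos_sum n (x + d) = - sin (2 * real n * x) / (2 * sin (x + d))"
      using s1 s12 by (simp add: odd_cos_sum_eq)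
    then have eq: "(-1)^m * (odd_cos_sum n x + odd_cos_sum n (x + d))
        = ((-1)^m * sin (2 * real n * x)) * (1 / (2 * sin x) - 1 / (2 * sin (x + d)))"
      using s1 by (simp add: odd_cos_sum_eq field_simps)
    have pos: "(-1)^m * sin (2 * real n * x) > 0"
      using x np by (intro sign_sin_between_multiples_of_pi) (auto simp: lobe_node_def field_simps)
    have inv: "1 / (2 * sin x) - 1 / (2 * sin (x + d)) \<ge> 0"
      using s1 s12 by (simp add: frac_le)
    have "(-1)^m * (odd_cos_sum n x + odd_cos_sum n (x + d)) \<ge> 0"
      unfolding eq using less_imp_le[OF pos] inv by (rule mult_nonneg_nonneg)
    moreover have "(?Q has_real_derivative (-1)^m * (odd_cos_sum n x + odd_cos_sum n (x + d))) (at x)"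
      by (auto intro!: derivative_eq_intros square_wave_sum_has_derivative[THEN DERIV_chain2]
          simp: square_wave_sum_has_derivative)
    ultimately show ?thesis by blast
  qed
  have "?Q (lobe_node n m) \<le> ?Q (lobe_node n (Suc m))"
    by (rule DERIV_nonneg_imp_increasing_open[OF lobe_node_mono])
       (use der in \<open>auto intro!: continuous_intros\<close>)
  then show ?thesis by (simp add: node algebra_simps)
qed

lemma square_wave_sum_even_nodes_increasing:
  "2 * j \<le> n \<Longrightarrow> i \<le> j \<Longrightarrow> square_wave_sum n (lobe_node n (2 * i)) \<le> square_wave_sum n (lobe_node n (2 * j))"
proof (induction j)
  case (Suc j)
  have "square_wave_sum n (lobe_node n (2 * j)) \<le> square_wave_sum n (lobe_node n (2 * Suc j))"
    using square_wave_sum_node_step[of "2 * j" n] Suc.prems by simp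
  with Suc show ?case by (cases "i = Suc j") auto
qed simp

lemma square_wave_sum_odd_nodes_decreasing:
  "2 * j + 1 \<le> n \<Longrightarrow> i \<le> j \<Longrightarrow> square_wave_sum n (lobe_node n (2 * j + 1)) \<le> square_wave_sum n (lobe_node n (2 * i + 1))"
proof (induction j)
  case (Suc j)
  have "square_wave_sum n (lobe_node n (2 * Suc j + 1)) \<le> square_wave_sum n (lobe_node n (2 * j + 1))"
    using square_wave_sum_node_step[of "2 * j + 1" n] Suc.prems by simp
  with Suc show ?case by (cases "i = Suc j") auto
qed simp

lemma square_wave_sum_node_bounds:
  assumes n: "2 \<le> n" and m: "m \<le> n"
  shows "0 \<le> square_wave_sum n (lobe_node n m)"
    and "square_wave_sum n (lobe_node n m) \<le> square_wave_sum n (lobe_node n 1)"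
    and "1 \<le> m \<Longrightarrow> square_wave_sum n (lobe_node n 2) \<le> square_wave_sum n (lobe_node n m)"
proof -
  let ?P = "\<lambda>k. square_wave_sum n (lobe_node n k)"
  have P0: "?P 0 = 0" by (simp add: lobe_node_def)
  have lobe: "(-1)^k * ?P k \<le> (-1)^k * ?P (Suc k)" if "Suc k \<le> n" for k
    using square_wave_sum_lobe_ends[OF that] .
  have P1: "0 \<le> ?P 1" "?P 2 \<le> ?P 1" using lobe[of 0] lobe[of 1] n P0 by (simp_all add: numeral_2_eq_2)
  have "0 \<le> ?P m \<and> ?P m \<le> ?P 1 \<and> (1 \<le> m \<longrightarrow> ?P 2 \<le> ?P m)"
  proof (cases "even m")
    case True
    then obtain i where i: "m = 2 * i" by blast
    have "0 \<le> ?P m" "1 \<le> i \<Longrightarrow> ?P 2 \<le> ?P m"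
      using square_wave_sum_even_nodes_increasing[of i n 0] square_wave_sum_even_nodes_increasing[of i n 1]
        m i P0 by auto
    moreover have "?P m \<le> ?P 1"
    proof (cases i)
      case (Suc j)
      then have "?P m \<le> ?P (2 * j + 1)" using lobe[of "2 * j + 1"] m i by simp
      also have "\<dots> \<le> ?P 1" using square_wave_sum_odd_nodes_decreasing[of j n 0] m i Suc by simp
      finally show ?thesis .
    qed (use i P0 P1 in simp)
    ultimately show ?thesis using i by auto
  next
    case False
    then obtain i where i: "m = 2 * i + 1" using oddE by blast
    have up: "?P m \<le> ?P 1" using square_wave_sum_odd_nodes_decreasing[of i n 0] m i by simp
    have "?P (2 * i) \<le> ?P m" using lobe[of "2 * i"] m i by simp
    moreover have "0 \<le> ?P (2 * i)" "1 \<le> i \<Longrightarrow> ?P 2 \<le> ?P (2 * i)"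
      using square_wave_sum_even_nodes_increasing[of i n 0] square_wave_sum_even_nodes_increasing[of i n 1]
        m i P0 by auto
    ultimately show ?thesis using up P1 i by (cases "i = 0") auto
  qed
  then show "0 \<le> ?P m" "?P m \<le> ?P 1" "1 \<le> m \<Longrightarrow> ?P 2 \<le> ?P m" by auto
qed

lemma lobe_containing:
  assumes n: "n \<ge> 1" and t: "0 \<le> t" "t \<le> pi / 2"
  obtains m where "Suc m \<le> n" "lobe_node n m \<le> t" "t \<le> lobe_node n (Suc m)"
proof -
  define r where "r = t / (pi / (2 * real n))"
  have np: "real n > 0" using n by simp
  have node: "lobe_node n k \<le> t \<longleftrightarrow> real k \<le> r" "t \<le> lobe_node n k \<longleftrightarrow> r \<le> real k" for k
    unfolding r_def lobe_node_def using np by (simp_all add: field_simps)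
  have r: "0 \<le> r" "r \<le> real n" unfolding r_def using t np by (simp_all add: field_simps)
  define m where "m = min (nat \<lfloor>r\<rfloor>) (n - 1)"
  show ?thesis
  proof (rule that[of m])
    show "Suc m \<le> n" using n unfolding m_def by simp
    have "real (nat \<lfloor>r\<rfloor>) \<le> r" using r by (simp add: of_nat_nat)
    then show "lobe_node n m \<le> t" unfolding node m_def by (simp add: min_def)
    have "r \<le> real (Suc (nat \<lfloor>r\<rfloor>))" using r by linarith
    then show "t \<le> lobe_node n (Suc m)" unfolding node m_def using r n by (auto simp: min_def)
  qed
qed

theorem square_wave_sum_quarter_period_bounds:
  assumes n: "n \<ge> 2" and t: "0 \<le> t" "t \<le> pi / 2"
  shows "0 \<le> square_wave_sum n t"
    and "square_wave_sum n t \<le> square_wave_sum n (lobe_node n 1)"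
    and "lobe_node n 1 \<le> t \<Longrightarrow> square_wave_sum n (lobe_node n 2) \<le> square_wave_sum n t"
proof -
  obtain m where m: "Suc m \<le> n" "lobe_node n m \<le> t" "t \<le> lobe_node n (Suc m)"
    using lobe_containing n t by (metis one_le_numeral order_trans)
  note between = square_wave_sum_between_nodes[OF m]
  note lo = square_wave_sum_node_bounds[OF n, of m] and hi = square_wave_sum_node_bounds[OF n, of "Suc m"]
  show "0 \<le> square_wave_sum n t" "square_wave_sum n t \<le> square_wave_sum n (lobe_node n 1)"
    using between lo hi m by (auto simp: min_def max_def split: if_splits)
  assume t1: "lobe_node n 1 \<le> t"
  show "square_wave_sum n (lobe_node n 2) \<le> square_wave_sum n t"
  proof (cases "m = 0")
    case True
    then have "t = lobe_node n 1" using t1 m by simp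
    then show ?thesis using hi m True by simp
  qed (use between lo hi m in \<open>auto simp: min_def split: if_splits\<close>)
qed

section \<open>The first two nodes\<close>

lemma increment_le_by_derivative:
  fixes f g :: "real \<Rightarrow> real"
  assumes "a \<le> b" "continuous_on {a..b} f" "continuous_on {a..b} g"
    and "\<And>x. a < x \<Longrightarrow> x < b \<Longrightarrow> (f has_real_derivative f' x) (at x)"
    and "\<And>x. a < x \<Longrightarrow> x < b \<Longrightarrow> (g has_real_derivative g' x) (at x)"
    and "\<And>x. a < x \<Longrightarrow> x < b \<Longrightarrow> f' x \<le> g' x"
  shows "f b - f a \<le> g b - g a"
proof -
  have "(\<lambda>x. g x - f x) a \<le> (\<lambda>x. g x - f x) b"
  proof (rule DERIV_nonneg_imp_increasing_open[OF assms(1)])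
    fix x assume "a < x" "x < b"
    then show "\<exists>y. ((\<lambda>x. g x - f x) has_real_derivative y) (at x) \<and> 0 \<le> y"
      using assms(4-6) by (intro exI[of _ "g' x - f' x"]) (auto intro!: DERIV_diff)
  qed (use assms(2,3) in \<open>intro continuous_intros\<close>)
  then show ?thesis by simp
qed

lemma odd_cos_sum_first_lobe_upper:
  assumes n: "n \<ge> 1" and x: "0 < x" "x < lobe_node n 1"
  defines "c \<equiv> 2 * real n" and "d \<equiv> (lobe_node n 1)^2 / 6"
  shows "odd_cos_sum n x \<le> c * (1 - (c*x)^2/6 + (c*x)^4/120) / (2 * (1 - d))"
proof -
  have x1: "lobe_node n 1 \<le> pi / 2" using n by (intro lobe_node_le_pi_half)
  have "d \<le> (pi / 2)^2 / 6" unfolding d_def using x1 lobe_node_nonneg[of n 1] by (intro divide_right_mono power_mono) auto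
  also have "\<dots> < 1"
    using mult_strict_mono[OF pi_less_4 pi_less_4] by (simp add: power2_eq_square)
  finally have d1: "1 - d > 0" by simp
  have cx: "0 < c * x" "c * x < pi" using x n unfolding c_def lobe_node_def by (auto simp: field_simps)
  have sx: "sin x \<ge> x * (1 - d)" using sin_ge_cubic_bound[of x "lobe_node n 1"] x unfolding d_def by simp
  have xd: "x * (1 - d) > 0" using x d1 by simp
  have "odd_cos_sum n x = sin (c*x) / (2 * sin x)"
    using sx xd by (simp add: odd_cos_sum_eq c_def)
  also have "\<dots> \<le> sin (c*x) / (2 * (x * (1 - d)))"
    using cx sx xd by (intro divide_left_mono sin_ge_zero) auto
  also have "\<dots> \<le> (c*x) * (1 - (c*x)^2/6 + (c*x)^4/120) / (2 * (x * (1 - d)))"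
    using sin_le_taylor_5[of "c*x"] cx xd
    by (intro divide_right_mono) (auto simp: algebra_simps power2_eq_square power3_eq_cube eval_nat_numeral)
  also have "\<dots> = c * (1 - (c*x)^2/6 + (c*x)^4/120) / (2 * (1 - d))"
    using x d1 by (simp add: field_simps)
  finally show ?thesis .
qed

theorem square_wave_sum_first_node_le_1:
  assumes n: "n \<ge> 10"
  shows "square_wave_sum n (lobe_node n 1) \<le> 1"
proof -
  define c where "c = 2 * real n"
  define x1 where "x1 = lobe_node n 1"
  define d where "d = x1^2 / 6"
  define G where "G = (\<lambda>t. ((c*t) - (c*t)^3/18 + (c*t)^5/600) / (2 * (1 - d)))"
  have cx1: "c * x1 = pi" "x1 > 0" unfolding c_def x1_def lobe_node_def using n by auto
  have "x1 \<le> (31416/10000) / 20"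
    unfolding x1_def lobe_node_def using pi_le_31416 n by (simp add: field_simps)
  then have "x1 * x1 \<le> (31416/10000/20) * (31416/10000/20)" using cx1 by (intro mult_mono) auto
  then have d: "d \<le> 5/1000" unfolding d_def by (simp add: power2_eq_square)
  have "square_wave_sum n x1 - square_wave_sum n 0 \<le> G x1 - G 0"
  proof (rule increment_le_by_derivative)
    fix x assume "0 < x" "x < x1"
    then show "odd_cos_sum n x \<le> c * (1 - (c*x)^2/6 + (c*x)^4/120) / (2 * (1 - d))"
      using odd_cos_sum_first_lobe_upper n unfolding c_def d_def x1_def by simp
    have "((\<lambda>t. (c*t) - (c*t)^3/18 + (c*t)^5/600) has_real_derivative c * (1 - (c*x)^2/6 + (c*x)^4/120)) (at x)"
      by (auto intro!: derivative_eq_intros simp: field_simps eval_nat_numeral)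
    then show "(G has_real_derivative c * (1 - (c*x)^2/6 + (c*x)^4/120) / (2 * (1 - d))) (at x)"
      unfolding G_def by (rule DERIV_cdivide)
  qed (use cx1 d square_wave_sum_has_derivative in \<open>auto simp: G_def intro!: continuous_intros\<close>)
  then have "square_wave_sum n x1 \<le> (pi - pi^3/18 + pi^5/600) / (2 * (1 - d))"
    using cx1 by (simp add: G_def)
  also have "\<dots> \<le> 1"
  proof -
    have "pi^3 \<ge> (31415/10000)^3" using pi_ge_31415 by (intro power_mono) auto
    then have p3: "pi^3 \<ge> 31003/1000" by (simp add: power_divide)
    have "pi^5 \<le> (31416/10000)^5" using pi_le_31416 by (intro power_mono) auto
    then have p5: "pi^5 \<le> 30603/100" by (simp add: power_divide)
    have "pi - pi^3/18 + pi^5/600 \<le> 2 * (1 - d)" using p3 p5 pi_le_31416 d by (simp add: field_simps)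
    then show ?thesis using d by simp
  qed
  finally show ?thesis unfolding x1_def .
qed

lemma odd_cos_sum_first_lobe_lower:
  assumes n: "n \<ge> 1" and x: "0 < x" "x < lobe_node n 1"
  defines "c \<equiv> 2 * real n"
  shows "c * (1 - (c*x)^2/6 + (c*x)^4/120 - (c*x)^6/5040) / 2 \<le> odd_cos_sum n x"
proof -
  have cx: "0 < c * x" "c * x < pi" using x n unfolding c_def lobe_node_def by (auto simp: field_simps)
  have "x < pi" using x lobe_node_le_pi_half[OF n] by linarith
  then have sx: "0 < sin x" "sin x \<le> x" using x by (auto intro: sin_gt_zero sin_x_le_x)
  have "c * (1 - (c*x)^2/6 + (c*x)^4/120 - (c*x)^6/5040) / 2
      = (c*x) * (1 - (c*x)^2/6 + (c*x)^4/120 - (c*x)^6/5040) / (2 * x)"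
    using x by (simp add: field_simps)
  also have "\<dots> \<le> sin (c*x) / (2 * x)"
    using sin_ge_taylor_7[of "c*x"] cx x
    by (intro divide_right_mono) (auto simp: algebra_simps power2_eq_square power3_eq_cube eval_nat_numeral)
  also have "\<dots> \<le> sin (c*x) / (2 * sin x)"
    using cx sx by (intro divide_left_mono sin_ge_zero) auto
  also have "\<dots> = odd_cos_sum n x"
    using sx by (simp add: odd_cos_sum_eq c_def)
  finally show ?thesis .
qed

lemma square_wave_sum_first_node_ge:
  assumes n: "n \<ge> 1"
  shows "9216/10000 \<le> square_wave_sum n (lobe_node n 1)"
proof -
  define c where "c = 2 * real n"
  define x1 where "x1 = lobe_node n 1"
  define G where "G = (\<lambda>t. ((c*t) - (c*t)^3/18 + (c*t)^5/600 - (c*t)^7/35280) / 2)"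
  have cx1: "c * x1 = pi" "x1 > 0" unfolding c_def x1_def lobe_node_def using n by auto
  have "G x1 - G 0 \<le> square_wave_sum n x1 - square_wave_sum n 0"
  proof (rule increment_le_by_derivative)
    fix x assume "0 < x" "x < x1"
    then show "c * (1 - (c*x)^2/6 + (c*x)^4/120 - (c*x)^6/5040) / 2 \<le> odd_cos_sum n x"
      using odd_cos_sum_first_lobe_lower n unfolding c_def x1_def by simp
    have "((\<lambda>t. (c*t) - (c*t)^3/18 + (c*t)^5/600 - (c*t)^7/35280) has_real_derivative
        c * (1 - (c*x)^2/6 + (c*x)^4/120 - (c*x)^6/5040)) (at x)"
      by (auto intro!: derivative_eq_intros simp: field_simps eval_nat_numeral)
    then show "(G has_real_derivative c * (1 - (c*x)^2/6 + (c*x)^4/120 - (c*x)^6/5040) / 2) (at x)"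
      unfolding G_def by (rule DERIV_cdivide)
  qed (use cx1 square_wave_sum_has_derivative in \<open>auto simp: G_def intro!: continuous_intros\<close>)
  then have "(pi - pi^3/18 + pi^5/600 - pi^7/35280) / 2 \<le> square_wave_sum n x1"
    using cx1 by (simp add: G_def)
  moreover have "9216/10000 \<le> (pi - pi^3/18 + pi^5/600 - pi^7/35280) / 2"
  proof -
    have "pi^3 \<le> (31416/10000)^3" "pi^7 \<le> (31416/10000)^7" using pi_le_31416 by (intro power_mono; simp)+
    moreover have "(31415/10000)^5 \<le> pi^5" using pi_ge_31415 by (intro power_mono) auto
    ultimately have "pi^3 \<le> 31006495/1000000" "30597456/100000 \<le> pi^5" "pi^7 \<le> 30203427/10000"
      by (simp_all add: power_divide)
    then show ?thesis using pi_ge_31415 by (simp add: field_simps)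
  qed
  ultimately show ?thesis unfolding x1_def by linarith
qed

lemma inverse_le_chord:
  fixes a b x :: real
  assumes "0 < a" "a \<le> x" "x \<le> b"
  shows "1 / x \<le> 1 / a + 1 / b - x / (a * b)"
proof -
  have "(x - a) * (x - b) \<le> 0" using assms by (simp add: mult_nonneg_nonpos)
  then have "0 \<le> (x * (a + b) - x^2 - a * b) / (x * a * b)"
    using assms by (intro divide_nonneg_pos) (auto simp: algebra_simps power2_eq_square)
  also have "\<dots> = 1 / a + 1 / b - x / (a * b) - 1 / x"
    using assms by (simp add: field_simps power2_eq_square)
  finally show ?thesis by simp
qed

text \<open>On the second lobe \<open>1 / (2 sin x) \<le> k / x\<close>; replacing the convex function \<open>1 / x\<close> by
  its chord makes the resulting lower bound for \<open>odd_cos_sum\<close> integrable in closed form.\<close>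

lemma odd_cos_sum_second_lobe_lower:
  assumes n: "n \<ge> 2" and x: "lobe_node n 1 < x" "x < lobe_node n 2"
  defines "x1 \<equiv> lobe_node n 1" and "x2 \<equiv> lobe_node n 2"
  defines "k \<equiv> 1 / (2 * (1 - x2^2 / 6))"
  shows "k * sin (2 * real n * x) * (1/x1 + 1/x2 - x/(x1*x2)) \<le> odd_cos_sum n x"
proof -
  have x1: "0 < x1" unfolding x1_def lobe_node_def using n by simp
  have "x2 \<le> pi / 2" unfolding x2_def using n by (intro lobe_node_le_pi_half)
  then have "x2^2 / 6 \<le> (pi / 2)^2 / 6" using x x1 unfolding x1_def x2_def
    by (intro divide_right_mono power_mono) auto
  also have "\<dots> < 1"
    using mult_strict_mono[OF pi_less_4 pi_less_4] by (simp add: power2_eq_square)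
  finally have d: "1 - x2^2 / 6 > 0" by simp
  have sc: "sin (2 * real n * x) \<le> 0"
    using x n by (intro sin_le_zero) (auto simp: lobe_node_def field_simps)
  have sx: "sin x \<ge> x * (1 - x2^2/6)" using sin_ge_cubic_bound[of x x2] x x1 unfolding x1_def x2_def by simp
  have xd: "x * (1 - x2^2/6) > 0" using x x1 d unfolding x1_def by simp
  have "1 / (2 * sin x) \<le> 1 / (2 * (x * (1 - x2^2/6)))" using sx xd by (intro divide_left_mono) auto
  also have "\<dots> = k * (1 / x)" unfolding k_def by simp
  also have "\<dots> \<le> k * (1/x1 + 1/x2 - x/(x1*x2))"
    using x x1 d unfolding k_def x1_def x2_def by (intro mult_left_mono inverse_le_chord) auto
  finally have "sin (2 * real n * x) * (k * (1/x1 + 1/x2 - x/(x1*x2))) \<le> sin (2 * real n * x) * (1 / (2 * sin x))"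
    using sc by (intro mult_left_mono_neg) auto
  also have "\<dots> = odd_cos_sum n x" using sx xd by (simp add: odd_cos_sum_eq)
  finally show ?thesis by (simp add: algebra_simps)
qed

lemma square_wave_sum_second_node_ge_first:
  assumes n: "n \<ge> 10"
  shows "square_wave_sum n (lobe_node n 1) - 2428/10000 \<le> square_wave_sum n (lobe_node n 2)"
proof -
  define c where "c = 2 * real n"
  define x1 where "x1 = lobe_node n 1"
  define x2 where "x2 = lobe_node n 2"
  define d where "d = x2^2 / 6"
  define k where "k = 1 / (2 * (1 - d))"
  define A where "A = k * (1/x1 + 1/x2)"
  define B where "B = k / (x1 * x2)"
  define G where "G = (\<lambda>t. - cos (c*t) * (A - B*t) / c - B * sin (c*t) / c^2)"
  have c: "c > 0" "c * x1 = pi" "c * x2 = 2 * pi" "x1 > 0" "x1 < x2"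
    unfolding c_def x1_def x2_def lobe_node_def using n by (auto simp: field_simps)
  have "x2 \<le> 31416/100000"
    unfolding x2_def lobe_node_def using pi_le_31416 n by (simp add: field_simps)
  then have "x2 * x2 \<le> (31416/100000) * (31416/100000)" using c by (intro mult_mono) auto
  then have d: "d \<le> 165/10000" unfolding d_def by (simp add: power2_eq_square)
  have "G x2 - G x1 \<le> square_wave_sum n x2 - square_wave_sum n x1"
  proof (rule increment_le_by_derivative)
    fix x assume x: "x1 < x" "x < x2"
    have "sin (c*x) * (A - B*x) = k * sin (c*x) * (1/x1 + 1/x2 - x/(x1*x2))"
      unfolding A_def B_def by (simp add: algebra_simps)
    then show "sin (c*x) * (A - B*x) \<le> odd_cos_sum n x"
      using odd_cos_sum_second_lobe_lower[of n x] n x unfolding k_def d_def c_def x1_def x2_def by simp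
    show "(G has_real_derivative sin (c*x) * (A - B*x)) (at x)"
      unfolding G_def using c by (auto intro!: derivative_eq_intros simp: field_simps power2_eq_square)
  qed (use c square_wave_sum_has_derivative in \<open>auto simp: G_def intro!: continuous_intros\<close>)
  moreover have "G x2 - G x1 = - 3 / (4 * pi * (1 - d))"
  proof -
    have "G x2 - G x1 = - (2 * A - B * (x1 + x2)) / c"
      unfolding G_def using c by (simp add: field_simps)
    also have "2 * A - B * (x1 + x2) = k * (1/x1 + 1/x2)"
      unfolding A_def B_def using c by (simp add: field_simps)
    also have "1/x1 + 1/x2 = 3 * c / (2 * pi)"
      unfolding x1_def x2_def c_def lobe_node_def using n by (simp add: field_simps)
    also have "- (k * (3 * c / (2 * pi))) / c = - 3 / (4 * pi * (1 - d))"
      unfolding k_def using c d by (simp add: field_simps)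
    finally show ?thesis .
  qed
  moreover have "3 / (4 * pi * (1 - d)) \<le> 2428/10000"
  proof -
    have "(31415/10000) * (1 - 165/10000) \<le> pi * (1 - d)"
      using pi_ge_31415 d by (intro mult_mono) auto
    then have "3 / (4 * (pi * (1 - d))) \<le> 3 / (4 * ((31415/10000) * (1 - 165/10000)))"
      by (intro divide_left_mono mult_left_mono) auto
    also have "\<dots> \<le> 2428/10000" by simp
    finally show ?thesis by (simp add: mult.assoc)
  qed
  ultimately show ?thesis unfolding x1_def x2_def by linarith
qed

theorem square_wave_sum_second_node_ge:
  assumes n: "n \<ge> 10"
  shows "1/3 + 1/pi \<le> square_wave_sum n (lobe_node n 2)"
proof -
  have "1/pi \<le> 1/(31415/10000)" using pi_ge_31415 by (intro divide_left_mono) auto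
  then show ?thesis
    using square_wave_sum_first_node_ge[of n] square_wave_sum_second_node_ge_first[OF n] n by simp
qed

lemma square_wave_sum_small_pos:
  assumes n: "n \<ge> 14" and x: "0 \<le> x" "x \<le> 7 * pi / real n"
  shows "0 \<le> square_wave_sum n x \<and> square_wave_sum n x \<le> 1"
proof -
  have "7 * pi / real n \<le> pi / 2" using n by (simp add: field_simps)
  then show ?thesis
    using square_wave_sum_quarter_period_bounds[of n x] square_wave_sum_first_node_le_1[of n] n x by auto
qed

lemma square_wave_sum_small_neg:
  assumes n: "n \<ge> 14" and x: "- (7 * pi / real n) \<le> x" "x \<le> 0"
  shows "- 1 \<le> square_wave_sum n x \<and> square_wave_sum n x \<le> 0"
  using square_wave_sum_small_pos[OF n, of "-x"] x square_wave_sum_minus[of n x] by simp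

section \<open>Increments of the square wave sum away from its jumps\<close>

lemma abs_increment_le_by_derivative:
  fixes f g f' g' :: "real \<Rightarrow> real"
  assumes xy: "x \<le> y"
    and f: "\<And>t. x \<le> t \<Longrightarrow> t \<le> y \<Longrightarrow> (f has_real_derivative f' t) (at t)"
    and g: "\<And>t. x \<le> t \<Longrightarrow> t \<le> y \<Longrightarrow> (g has_real_derivative g' t) (at t)"
    and le: "\<And>t. x \<le> t \<Longrightarrow> t \<le> y \<Longrightarrow> \<bar>f' t\<bar> \<le> g' t"
  shows "\<bar>f y - f x\<bar> \<le> g y - g x"
proof -
  have "(\<lambda>t. g t - s * f t) x \<le> (\<lambda>t. g t - s * f t) y" if s: "\<bar>s\<bar> = 1" for s
  proof (rule DERIV_nonneg_imp_nondecreasing[OF xy])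
    fix t assume t: "x \<le> t" "t \<le> y"
    have "s = 1 \<or> s = -1" using s by auto
    then have "s * f' t \<le> g' t" using le[OF t] by auto
    with t show "\<exists>z. ((\<lambda>t. g t - s * f t) has_real_derivative z) (at t) \<and> 0 \<le> z"
      using f g le by (intro exI[of _ "g' t - s * f' t"]) (auto intro!: derivative_eq_intros)
  qed
  from this[of 1] this[of "-1"] show ?thesis by simp
qed

lemma square_wave_sum_corrected_derivative:
  assumes n: "n \<ge> 1" and t: "sin t \<noteq> 0"
  shows "((\<lambda>t. square_wave_sum n t + cos (2 * real n * t) / (4 * real n * sin t)) has_real_derivative
           - cos (2 * real n * t) * cos t / (4 * real n * (sin t)^2)) (at t)"
proof -
  have "((\<lambda>t. square_wave_sum n t + cos (2 * real n * t) / (4 * real n * sin t)) has_real_derivative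
      odd_cos_sum n t + (- sin (2 * real n * t) * (2 * real n) * (4 * real n * sin t)
        - cos (2 * real n * t) * (4 * real n * cos t)) / (4 * real n * sin t)^2) (at t)"
    using n t by (auto intro!: derivative_eq_intros square_wave_sum_has_derivative simp: power2_eq_square)
  moreover have "odd_cos_sum n t + (- sin (2 * real n * t) * (2 * real n) * (4 * real n * sin t)
        - cos (2 * real n * t) * (4 * real n * cos t)) / (4 * real n * sin t)^2
      = - cos (2 * real n * t) * cos t / (4 * real n * (sin t)^2)"
    using n t by (simp add: odd_cos_sum_eq field_simps power2_eq_square)
  ultimately show ?thesis by simp
qed

lemma neg_cot_has_derivative: "sin t \<noteq> 0 \<Longrightarrow> ((\<lambda>t. - cot t) has_real_derivative 1 / (sin t)^2) (at t)"
  using DERIV_minus[OF DERIV_cot[of t]] by (simp add: divide_inverse)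

lemma abs_inverse_sin_increment_le:
  assumes "0 < x" "x \<le> y" "y < pi"
  shows "\<bar>1 / sin y - 1 / sin x\<bar> \<le> cot x - cot y"
proof -
  have "\<bar>1 / sin y - 1 / sin x\<bar> \<le> - cot y - - cot x"
  proof (rule abs_increment_le_by_derivative[OF assms(2)])
    fix t assume t: "x \<le> t" "t \<le> y"
    then have "sin t > 0" using assms by (intro sin_gt_zero) auto
    then show "((\<lambda>t. 1 / sin t) has_real_derivative - cos t / (sin t)^2) (at t)"
      by (auto intro!: derivative_eq_intros simp: power2_eq_square)
    show "((\<lambda>t. - cot t) has_real_derivative 1 / (sin t)^2) (at t)"
      using \<open>sin t > 0\<close> by (simp add: neg_cot_has_derivative)
    show "\<bar>- cos t / (sin t)^2\<bar> \<le> 1 / (sin t)^2" by (simp add: abs_mult divide_right_mono)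
  qed
  then show ?thesis by simp
qed

text \<open>Integration by parts: \<open>odd_cos_sum n t = sin (2 n t) / (2 sin t)\<close>, and the boundary terms
  \<open>cos (2 n t) / (4 n sin t)\<close> share the factor \<open>cos (2 n x) = cos (2 n y)\<close> because \<open>y - x\<close> is a
  multiple of \<open>pi / n\<close>. Both the remaining integral and the boundary difference are bounded through
  \<open>|d/dt (1 / sin t)| \<le> - d/dt cot t\<close>.\<close>

theorem square_wave_sum_increment_far:
  assumes n: "n \<ge> 1" and xy: "0 < x" "x \<le> y" "y < pi"
    and m: "y - x = of_int m * pi / real n"
  shows "\<bar>square_wave_sum n y - square_wave_sum n x\<bar> \<le> (cot x - cot y) / (2 * real n)"
proof -
  have np: "real n > 0" using n by simp
  have sin_pos: "sin t > 0" if "x \<le> t" "t \<le> y" for t using that xy by (intro sin_gt_zero) auto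
  define Psi where "Psi = (\<lambda>t. square_wave_sum n t + cos (2 * real n * t) / (4 * real n * sin t))"
  have Psi: "\<bar>Psi y - Psi x\<bar> \<le> (cot x - cot y) / (4 * real n)"
  proof -
    have "\<bar>Psi y - Psi x\<bar> \<le> (- cot y / (4 * real n)) - (- cot x / (4 * real n))"
    proof (rule abs_increment_le_by_derivative[OF xy(2)])
      fix t assume t: "x \<le> t" "t \<le> y"
      show "(Psi has_real_derivative - cos (2 * real n * t) * cos t / (4 * real n * (sin t)^2)) (at t)"
        unfolding Psi_def using sin_pos[OF t] n by (intro square_wave_sum_corrected_derivative) auto
      show "((\<lambda>t. - cot t / (4 * real n)) has_real_derivative 1 / (sin t)^2 / (4 * real n)) (at t)"
        using neg_cot_has_derivative sin_pos[OF t] by (intro DERIV_cdivide) auto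
      have "\<bar>cos (2 * real n * t) * cos t\<bar> \<le> 1" by (simp add: abs_mult mult_le_one)
      then show "\<bar>- cos (2 * real n * t) * cos t / (4 * real n * (sin t)^2)\<bar> \<le> 1 / (sin t)^2 / (4 * real n)"
        using np by (simp add: abs_mult divide_right_mono field_simps)
    qed
    then show ?thesis by (simp add: diff_divide_distrib)
  qed
  have inv_sin: "\<bar>1 / sin y - 1 / sin x\<bar> \<le> cot x - cot y"
    using xy by (rule abs_inverse_sin_increment_le)
  have "2 * real n * y = 2 * real n * x + 2 * pi * of_int m"
    using m np by (simp add: field_simps)
  then have "cos (2 * real n * y) = cos (2 * real n * x)"
    by (simp only: cos_add cos_int_2pin sin_int_2pin)
  then have eq: "square_wave_sum n y - square_wave_sum n x
      = (Psi y - Psi x) - cos (2 * real n * x) * (1 / sin y - 1 / sin x) / (4 * real n)"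
    unfolding Psi_def using np by (simp add: field_simps)
  have "\<bar>cos (2 * real n * x)\<bar> * \<bar>1 / sin y - 1 / sin x\<bar> \<le> 1 * (cot x - cot y)"
    using inv_sin by (intro mult_mono) auto
  then have boundary: "\<bar>cos (2 * real n * x) * (1 / sin y - 1 / sin x) / (4 * real n)\<bar> \<le> (cot x - cot y) / (4 * real n)"
    using np by (simp add: abs_mult divide_right_mono)
  have "\<bar>square_wave_sum n y - square_wave_sum n x\<bar>
      \<le> \<bar>Psi y - Psi x\<bar> + \<bar>cos (2 * real n * x) * (1 / sin y - 1 / sin x) / (4 * real n)\<bar>"
    unfolding eq by (rule abs_triangle_ineq4)
  also have "\<dots> \<le> (cot x - cot y) / (4 * real n) + (cot x - cot y) / (4 * real n)"
    using Psi boundary by (rule add_mono)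
  also have "\<dots> = (cot x - cot y) / (2 * real n)" by (simp add: field_simps)
  finally show ?thesis .
qed

lemma sum_increments_disjoint_le:
  fixes X Y :: "'a \<Rightarrow> real" and W :: "real \<Rightarrow> real"
  assumes "finite S" "\<forall>J\<in>S. A \<le> X J \<and> X J \<le> Y J \<and> Y J \<le> B"
    and "\<forall>J\<in>S. \<forall>J'\<in>S. J \<noteq> J' \<longrightarrow> Y J < X J' \<or> Y J' < X J"
    and "\<forall>u v. A \<le> u \<longrightarrow> u \<le> v \<longrightarrow> v \<le> B \<longrightarrow> W u \<le> W v" "A \<le> B"
  shows "(\<Sum>J\<in>S. W (Y J) - W (X J)) \<le> W B - W A"
  using assms
proof (induction "card S" arbitrary: S B rule: less_induct)
  case less
  show ?case
  proof (cases "S = {}")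
    case False
    have fx: "finite (X ` S)" "X ` S \<noteq> {}" using False less.prems(1) by auto
    obtain J0 where J0: "J0 \<in> S" "X J0 = Max (X ` S)" using Max_in[OF fx] by auto
    have last: "X J \<le> X J0" if "J \<in> S" for J using J0 Max_ge[OF fx(1)] that by auto
    let ?S = "S - {J0}"
    have rest: "A \<le> X J \<and> X J \<le> Y J \<and> Y J \<le> X J0" if J: "J \<in> ?S" for J
    proof -
      have "Y J < X J0 \<or> Y J0 < X J" using less.prems(3) J J0(1) by blast
      moreover have "X J \<le> X J0" "X J0 \<le> Y J0" "A \<le> X J" "X J \<le> Y J"
        using last less.prems(2) J J0(1) by auto
      ultimately show ?thesis by linarith
    qed
    have "(\<Sum>J\<in>?S. W (Y J) - W (X J)) \<le> W (X J0) - W A"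
    proof (rule less.hyps[OF card_Diff1_less[OF less.prems(1) J0(1)]])
      show "\<forall>u v. A \<le> u \<longrightarrow> u \<le> v \<longrightarrow> v \<le> X J0 \<longrightarrow> W u \<le> W v"
        using less.prems(2,4) J0(1) by (meson order_trans)
      show "A \<le> X J0" using less.prems(2) J0(1) by blast
    qed (use less.prems(1,3) rest in auto)
    moreover have "W (Y J0) \<le> W B" using less.prems(2,4) J0 by auto
    ultimately show ?thesis using J0 less.prems(1) by (simp add: sum.remove)
  qed (use less.prems in simp)
qed

theorem square_wave_sum_far_family:
  fixes X Y :: "'a \<Rightarrow> real"
  assumes n: "n \<ge> 2" and fin: "finite S"
    and iv: "\<forall>J\<in>S. pi / real n \<le> X J \<and> X J \<le> Y J \<and> Y J \<le> pi - pi / real n \<and>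
                    (\<exists>m::int. Y J - X J = of_int m * pi / real n)"
    and dj: "\<forall>J\<in>S. \<forall>J'\<in>S. J \<noteq> J' \<longrightarrow> Y J < X J' \<or> Y J' < X J"
  shows "(\<Sum>J\<in>S. \<bar>square_wave_sum n (Y J) - square_wave_sum n (X J)\<bar>) \<le> 1 / pi"
proof -
  define a where "a = pi / real n"
  have a: "0 < a" "a \<le> pi / 2" unfolding a_def using n by (auto simp: field_simps)
  have cot_mono: "- cot u \<le> - cot v" if "a \<le> u" "u \<le> v" "v \<le> pi - a" for u v
  proof (rule DERIV_nonneg_imp_nondecreasing[OF that(2)])
    fix t assume "u \<le> t" "t \<le> v"
    then have "sin t > 0" using that a by (intro sin_gt_zero) auto
    then show "\<exists>y. ((\<lambda>t. - cot t) has_real_derivative y) (at t) \<and> 0 \<le> y"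
      using neg_cot_has_derivative[of t] by auto
  qed
  have "(\<Sum>J\<in>S. \<bar>square_wave_sum n (Y J) - square_wave_sum n (X J)\<bar>)
      \<le> (\<Sum>J\<in>S. (- cot (Y J)) - (- cot (X J))) / (2 * real n)"
    unfolding sum_divide_distrib
  proof (rule sum_mono)
    fix J assume "J \<in> S"
    then have XY: "a \<le> X J" "X J \<le> Y J" "Y J \<le> pi - a" "\<exists>m::int. Y J - X J = of_int m * pi / real n"
      using iv unfolding a_def by blast+
    then obtain m :: int where "Y J - X J = of_int m * pi / real n" "0 < X J" "Y J < pi"
      using a by fastforce
    then show "\<bar>square_wave_sum n (Y J) - square_wave_sum n (X J)\<bar> \<le> (- cot (Y J) - - cot (X J)) / (2 * real n)"
      using square_wave_sum_increment_far[of n "X J" "Y J" m] n XY by simp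
  qed
  also have "\<dots> \<le> ((- cot (pi - a)) - (- cot a)) / (2 * real n)"
  proof (intro divide_right_mono)
    show "(\<Sum>J\<in>S. (- cot (Y J)) - (- cot (X J))) \<le> (- cot (pi - a)) - (- cot a)"
    proof (rule sum_increments_disjoint_le[OF fin _ dj, where W="\<lambda>t. - cot t"])
      show "\<forall>J\<in>S. a \<le> X J \<and> X J \<le> Y J \<and> Y J \<le> pi - a" using iv unfolding a_def by blast
    qed (use cot_mono a in auto)
  qed simp
  also have "\<dots> = (cos a / sin a) / real n" by (simp add: cot_def)
  also have "\<dots> \<le> (1 / a) / real n"
    using x_cos_le_sin[of a] a sin_gt_zero[of a] by (intro divide_right_mono) (auto simp: field_simps)
  also have "\<dots> = 1 / pi" unfolding a_def using n by simp
  finally show ?thesis .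
qed

section \<open>Arcs of the circle\<close>

lemma mem_arc_iff: "x \<in> arc a b \<longleftrightarrow> (\<exists>k::int. a \<le> x + 2 * pi * of_int k \<and> x + 2 * pi * of_int k \<le> b)"
  by (simp add: arc_def)

lemma arc_memI: "a \<le> x \<Longrightarrow> x \<le> b \<Longrightarrow> x \<in> arc a b"
  unfolding mem_arc_iff by (rule exI[of _ 0]) simp

lemma arc_add_2pi_int: "x \<in> arc a b \<Longrightarrow> x + 2 * pi * of_int m \<in> arc a b"
proof -
  assume "x \<in> arc a b"
  then obtain k :: int where "a \<le> x + 2 * pi * of_int k" "x + 2 * pi * of_int k \<le> b"
    by (auto simp: mem_arc_iff)
  moreover have "x + 2 * pi * of_int m + 2 * pi * of_int (k - m) = x + 2 * pi * of_int k"
    by (simp add: algebra_simps)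
  ultimately show ?thesis unfolding mem_arc_iff by (intro exI[of _ "k - m"]) simp
qed

lemma arc_shift_2pi_int: "arc (a + 2 * pi * of_int k) (b + 2 * pi * of_int k) = arc a b"
proof -
  have "(\<exists>j::int. a + 2 * pi * of_int k \<le> x + 2 * pi * of_int j \<and> x + 2 * pi * of_int j \<le> b + 2 * pi * of_int k) \<longleftrightarrow>
        (\<exists>j::int. a \<le> x + 2 * pi * of_int j \<and> x + 2 * pi * of_int j \<le> b)" for x
  proof
    assume "\<exists>j::int. a + 2 * pi * of_int k \<le> x + 2 * pi * of_int j \<and> x + 2 * pi * of_int j \<le> b + 2 * pi * of_int k"
    then obtain j :: int where "a + 2 * pi * of_int k \<le> x + 2 * pi * of_int j" "x + 2 * pi * of_int j \<le> b + 2 * pi * of_int k"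
      by blast
    then show "\<exists>j::int. a \<le> x + 2 * pi * of_int j \<and> x + 2 * pi * of_int j \<le> b"
      by (intro exI[of _ "j - k"]) (simp add: algebra_simps)
  next
    assume "\<exists>j::int. a \<le> x + 2 * pi * of_int j \<and> x + 2 * pi * of_int j \<le> b"
    then obtain j :: int where "a \<le> x + 2 * pi * of_int j" "x + 2 * pi * of_int j \<le> b" by blast
    then show "\<exists>j::int. a + 2 * pi * of_int k \<le> x + 2 * pi * of_int j \<and> x + 2 * pi * of_int j \<le> b + 2 * pi * of_int k"
      by (intro exI[of _ "j + k"]) (simp add: algebra_simps)
  qed
  then show ?thesis unfolding arc_def by blast
qed

lemma shift_2pi_into_period: "\<exists>k::int. c \<le> x + 2 * pi * of_int k \<and> x + 2 * pi * of_int k < c + 2 * pi"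
proof -
  define k where "k = \<lceil>(c - x) / (2 * pi)\<rceil>"
  have "(c - x) / (2 * pi) \<le> of_int k" "of_int k < (c - x) / (2 * pi) + 1"
    unfolding k_def by linarith+
  then show ?thesis by (intro exI[of _ k]) (simp add: field_simps)
qed

lemma mem_arc_window_iff:
  assumes "a < b" "b < a + 2 * pi" and "a \<le> x" "x < a + 2 * pi"
  shows "x \<in> arc a b \<longleftrightarrow> x \<le> b"
proof
  assume "x \<in> arc a b"
  then obtain k :: int where k: "a \<le> x + 2 * pi * of_int k" "x + 2 * pi * of_int k \<le> b"
    by (auto simp: mem_arc_iff)
  consider "k \<ge> 1" | "k \<le> -1" | "k = 0" by linarith
  then show "x \<le> b"
  proof cases
    case 1
    then have "2 * pi * of_int k \<ge> 2 * pi * 1" by (intro mult_left_mono) auto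
    then show ?thesis using k assms by linarith
  next
    case 2
    then have "2 * pi * of_int k \<le> 2 * pi * (-1)" by (intro mult_left_mono) auto
    then show ?thesis using k assms by linarith
  qed (use k in simp)
qed (use assms in \<open>auto intro: arc_memI\<close>)

lemma arc_eq_imp_shift:
  assumes ab: "a < b" "b - a < 2 * pi" and ab': "a' < b'" "b' - a' < 2 * pi"
    and eq: "arc a b = arc a' b'"
  shows "\<exists>k::int. a' = a + 2 * pi * of_int k \<and> b' = b + 2 * pi * of_int k"
proof -
  obtain k :: int where k: "a \<le> a' + 2 * pi * of_int k" "a' + 2 * pi * of_int k < a + 2 * pi"
    using shift_2pi_into_period by blast
  define a2 where "a2 = a' + 2 * pi * of_int k"
  define b2 where "b2 = b' + 2 * pi * of_int k"
  have eq2: "arc a b = arc a2 b2" unfolding a2_def b2_def arc_shift_2pi_int eq ..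
  have ab2: "a \<le> a2" "a2 < a + 2 * pi" "a2 < b2" "b2 < a2 + 2 * pi" using k ab' unfolding a2_def b2_def by auto
  have window: "x \<in> arc a b \<longleftrightarrow> x \<le> b" if "a \<le> x" "x < a + 2 * pi" for x
    using mem_arc_window_iff[OF ab(1) _ that] ab by simp
  have window2: "x \<in> arc a b \<longleftrightarrow> x \<le> b2" if "a2 \<le> x" "x < a2 + 2 * pi" for x
    unfolding eq2 using mem_arc_window_iff[OF ab2(3,4) that] .
  have "a2 \<le> b" using window[of a2] window2[of a2] ab2 by simp
  have aa: "a2 = a"
  proof (rule ccontr)
    assume "a2 \<noteq> a"
    then have lt: "a < a2" using ab2 by simp
    have "a + 2 * pi \<in> arc a b"
      using arc_add_2pi_int[OF arc_memI[of a a b], of 1] ab by simp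
    then have "a + 2 * pi \<le> b2" using window2[of "a + 2 * pi"] lt ab2 by simp
    define w where "w = (b + a + 2 * pi) / 2"
    have "w \<in> arc a b" using window2[of w] ab ab2 \<open>a2 \<le> b\<close> \<open>a + 2 * pi \<le> b2\<close> unfolding w_def by simp
    then show False using window[of w] ab unfolding w_def by simp
  qed
  have "b2 = b"
    using window[of b] window2[of b] window[of b2] window2[of b2] ab ab2 aa by force
  with aa show ?thesis unfolding a2_def b2_def by (intro exI[of _ "-k"]) auto
qed

lemma image_add_pi_arc: "(\<lambda>x. pi + x) ` arc a b = arc (a + pi) (b + pi)"
proof (intro set_eqI iffI)
  fix y assume "y \<in> (\<lambda>x. pi + x) ` arc a b"
  then obtain x where x: "y = pi + x" "x \<in> arc a b" by blast
  then obtain k :: int where "a \<le> x + 2 * pi * of_int k" "x + 2 * pi * of_int k \<le> b"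
    unfolding mem_arc_iff by blast
  then show "y \<in> arc (a + pi) (b + pi)" unfolding mem_arc_iff x(1) by (intro exI[of _ k]) simp
next
  fix y assume "y \<in> arc (a + pi) (b + pi)"
  then obtain k :: int where "a + pi \<le> y + 2 * pi * of_int k" "y + 2 * pi * of_int k \<le> b + pi"
    unfolding mem_arc_iff by blast
  then have "y - pi \<in> arc a b" unfolding mem_arc_iff by (intro exI[of _ k]) simp
  then show "y \<in> (\<lambda>x. pi + x) ` arc a b" by (intro image_eqI[of _ _ "y - pi"]) auto
qed

section \<open>The response of a single arc\<close>

text \<open>\<open>arc_wave n J\<close> is computed from any pair of endpoints of \<open>J\<close>: by \<open>arc_eq_imp_shift\<close> two
  such pairs differ by a common multiple of \<open>2 pi\<close>, and \<open>square_wave_sum n\<close> is \<open>2 pi\<close>-periodic.\<close>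

definition arc_wave :: "nat \<Rightarrow> real set \<Rightarrow> real \<Rightarrow> real" where
  "arc_wave n J \<phi> = (let p = SOME p. fst p < snd p \<and> snd p - fst p < 2 * pi \<and> J = arc (fst p) (snd p)
     in square_wave_sum n (snd p - \<phi>) - square_wave_sum n (fst p - \<phi>))"

definition family_wave :: "nat \<Rightarrow> real set set \<Rightarrow> (real set \<Rightarrow> real) \<Rightarrow> real \<Rightarrow> real" where
  "family_wave n \<I> \<alpha> \<phi> = (\<Sum>J\<in>\<I>. \<alpha> J * arc_wave n J \<phi>)"

lemma arc_wave_arc:
  assumes "a < b" "b - a < 2 * pi"
  shows "arc_wave n (arc a b) \<phi> = square_wave_sum n (b - \<phi>) - square_wave_sum n (a - \<phi>)"
proof -
  let ?R = "\<lambda>p. fst p < snd p \<and> snd p - fst p < 2 * pi \<and> arc a b = arc (fst p) (snd p)"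
  define p where "p = (SOME p. ?R p)"
  have "?R p" unfolding p_def by (rule someI[of ?R "(a, b)"]) (use assms in simp)
  then obtain k :: int where k: "fst p = a + 2 * pi * of_int k" "snd p = b + 2 * pi * of_int k"
    using arc_eq_imp_shift[OF assms] by blast
  have "square_wave_sum n (c + 2 * pi * of_int k - \<phi>) = square_wave_sum n (c - \<phi>)" for c
    using square_wave_sum_add_2pi_int[of n "c - \<phi>" k] by (simp add: algebra_simps)
  then show ?thesis unfolding arc_wave_def Let_def p_def[symmetric] k by simp
qed

lemma arc_wave_add_pi: "arc_wave n J (\<phi> + pi) = - arc_wave n J \<phi>"
proof -
  have "square_wave_sum n (c - (\<phi> + pi)) = - square_wave_sum n (c - \<phi>)" for c
    using square_wave_sum_diff_pi[of n "c - \<phi>"] by (simp add: algebra_simps)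
  then show ?thesis unfolding arc_wave_def Let_def by simp
qed

lemma arc_wave_image_add_pi:
  assumes "a < b" "b - a < 2 * pi"
  shows "arc_wave n ((\<lambda>x. pi + x) ` arc a b) \<phi> = - arc_wave n (arc a b) \<phi>"
proof -
  have "square_wave_sum n (c + pi - \<phi>) = - square_wave_sum n (c - \<phi>)" for c
    using square_wave_sum_add_pi[of n "c - \<phi>"] by (simp add: algebra_simps)
  then show ?thesis using assms by (simp add: image_add_pi_arc arc_wave_arc)
qed

section \<open>Separated families of arcs\<close>

lemma interval_avoiding_multiples_of_pi:
  fixes X Y d :: real
  assumes "0 < d" "0 \<le> X" "X \<le> Y" "X < 2 * pi"
    and avoid: "\<And>z. X \<le> z \<Longrightarrow> z \<le> Y \<Longrightarrow> d \<le> \<bar>z\<bar> \<and> d \<le> \<bar>z - pi\<bar> \<and> d \<le> \<bar>z - 2 * pi\<bar>"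
  shows "X < pi \<Longrightarrow> d \<le> X \<and> Y \<le> pi - d"
    and "pi \<le> X \<Longrightarrow> pi + d \<le> X \<and> Y \<le> 2 * pi - d"
proof -
  have X: "d \<le> \<bar>X\<bar>" "d \<le> \<bar>X - pi\<bar>" using avoid[of X] assms(3) by auto
  show "d \<le> X \<and> Y \<le> pi - d" if "X < pi"
  proof -
    have "d \<le> \<bar>min Y pi - pi\<bar>" using avoid[of "min Y pi"] assms(3) that by auto
    then show ?thesis using X assms(1,2) by (auto simp: min_def split: if_splits)
  qed
  show "pi + d \<le> X \<and> Y \<le> 2 * pi - d" if "pi \<le> X"
  proof -
    have "d \<le> \<bar>min Y (2 * pi) - 2 * pi\<bar>" using avoid[of "min Y (2 * pi)"] assms(3,4) by auto
    then show ?thesis using X that assms(1) by (auto simp: min_def split: if_splits)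
  qed
qed

text \<open>The part of well-separation used by the estimates below; disjointness of the arcs follows from
  their separation.\<close>

locale separated_arcs =
  fixes n :: nat and \<I> :: "real set set"
  assumes n_ge_14: "n \<ge> 14"
    and finite_arcs: "finite \<I>"
    and grid_arc: "J \<in> \<I> \<Longrightarrow> \<exists>a b m. a < b \<and> b - a \<le> 6 * pi / real n \<and> J = arc a b \<and> b - a = of_int m * pi / real n"
    and shift_pi_mem: "J \<in> \<I> \<Longrightarrow> (\<lambda>\<theta>. pi + \<theta>) ` J \<in> \<I>"
    and separated: "I \<in> \<I> \<Longrightarrow> J \<in> \<I> \<Longrightarrow> I \<noteq> J \<Longrightarrow> x \<in> I \<Longrightarrow> y \<in> J \<Longrightarrow> pi / real n \<le> \<bar>x - y\<bar>"
begin

lemma member_grid_arc: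
  assumes "J \<in> \<I>"
  obtains a b where "J = arc a b" "a < b" "pi / real n \<le> b - a" "b - a \<le> 6 * pi / real n" "b - a < pi"
    "\<exists>m::int. b - a = of_int m * pi / real n"
proof -
  obtain a b and m :: int where ab: "a < b" "b - a \<le> 6 * pi / real n" "J = arc a b" "b - a = of_int m * pi / real n"
    using grid_arc[OF assms] by blast
  have "0 < of_int m * pi / real n" using ab by simp
  then have "1 \<le> m" using n_ge_14 by (simp add: zero_less_divide_iff zero_less_mult_iff)
  then have "1 * pi / real n \<le> b - a" unfolding ab(4) by (intro divide_right_mono mult_right_mono) auto
  moreover have "6 * pi / real n < pi" using n_ge_14 by (simp add: field_simps)
  ultimately show ?thesis using ab that by force
qed

lemma member_add_2pi_int: "J \<in> \<I> \<Longrightarrow> p \<in> J \<Longrightarrow> p + 2 * pi * of_int m \<in> J"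
  by (rule member_grid_arc) (auto intro: arc_add_2pi_int)

lemma arc_around:
  assumes "J \<in> \<I>" "p \<in> J"
  obtains a b where "a \<le> p" "p \<le> b" "pi / real n \<le> b - a" "b - a \<le> 6 * pi / real n"
    "\<exists>m::int. b - a = of_int m * pi / real n"
    "\<And>\<phi>. arc_wave n J \<phi> = square_wave_sum n (b - \<phi>) - square_wave_sum n (a - \<phi>)"
    "\<And>z. a \<le> z \<Longrightarrow> z \<le> b \<Longrightarrow> z \<in> J"
proof -
  obtain a b where ab: "J = arc a b" "a < b" "pi / real n \<le> b - a" "b - a \<le> 6 * pi / real n" "b - a < pi"
    "\<exists>m::int. b - a = of_int m * pi / real n"
    using member_grid_arc[OF assms(1)] by blast
  obtain k :: int where k: "a \<le> p + 2 * pi * of_int k" "p + 2 * pi * of_int k \<le> b"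
    using assms(2) unfolding ab(1) mem_arc_iff by blast
  have J: "J = arc (a + 2 * pi * of_int (-k)) (b + 2 * pi * of_int (-k))"
    unfolding ab(1) arc_shift_2pi_int ..
  show ?thesis
  proof (rule that[of "a + 2 * pi * of_int (-k)" "b + 2 * pi * of_int (-k)"])
    show "arc_wave n J \<phi> = square_wave_sum n (b + 2 * pi * of_int (-k) - \<phi>) - square_wave_sum n (a + 2 * pi * of_int (-k) - \<phi>)" for \<phi>
      unfolding J using ab(2,5) pi_gt3 by (intro arc_wave_arc) auto
    show "z \<in> J" if "a + 2 * pi * of_int (-k) \<le> z" "z \<le> b + 2 * pi * of_int (-k)" for z
      unfolding J using that by (rule arc_memI)
  qed (use k ab in auto)
qed

lemma disjoint_arcs:
  assumes "I \<in> \<I>" "J \<in> \<I>" "I \<noteq> J" "x \<in> I"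
  shows "x \<notin> J"
proof
  assume "x \<in> J"
  then have "pi / real n \<le> \<bar>x - x\<bar>" by (rule separated[OF assms])
  moreover have "0 < pi / real n" using n_ge_14 by simp
  ultimately show False by simp
qed

lemma shift_pi_ne:
  assumes "I \<in> \<I>"
  shows "(\<lambda>x. pi + x) ` I \<noteq> I"
proof
  assume eq: "(\<lambda>x. pi + x) ` I = I"
  obtain a b where ab: "I = arc a b" "a < b" "b - a < pi"
    using member_grid_arc[OF assms] by metis
  have "a \<in> I" using ab arc_memI[of a a b] by simp
  then have "pi + a \<in> (\<lambda>x. pi + x) ` I" by (rule imageI)
  then have "pi + a \<in> I" by (simp only: eq)
  then have "pi + a \<le> b"
    using mem_arc_window_iff[of a b "pi + a"] ab by simp
  then show False using ab by simp
qed

lemma arc_wave_shift_pi: "I \<in> \<I> \<Longrightarrow> arc_wave n ((\<lambda>x. pi + x) ` I) \<phi> = - arc_wave n I \<phi>"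
proof (rule member_grid_arc)
  fix a b assume "I \<in> \<I>" "I = arc a b" "a < b" "b - a < pi"
  then show ?thesis using pi_gt_zero by (simp add: arc_wave_image_add_pi)
qed

lemma same_arc_if_close:
  "I \<in> \<I> \<Longrightarrow> J \<in> \<I> \<Longrightarrow> x \<in> I \<Longrightarrow> y \<in> J \<Longrightarrow> \<bar>x - y\<bar> < pi / real n \<Longrightarrow> I = J"
  using separated by force

lemma far_arc_window:
  assumes J: "J \<in> \<I>" and far: "\<forall>p\<in>J. pi / real n \<le> \<bar>p - \<phi>\<bar> \<and> pi / real n \<le> \<bar>p - \<phi> - pi\<bar>"
  obtains X Y where "X \<le> Y" "arc_wave n J \<phi> = square_wave_sum n Y - square_wave_sum n X"
    "\<And>z. X \<le> z \<Longrightarrow> z \<le> Y \<Longrightarrow> z + \<phi> \<in> J" "\<exists>m::int. Y - X = of_int m * pi / real n"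
    "X < pi \<Longrightarrow> pi / real n \<le> X \<and> Y \<le> pi - pi / real n"
    "pi \<le> X \<Longrightarrow> pi + pi / real n \<le> X \<and> Y \<le> 2 * pi - pi / real n"
proof -
  obtain a b where ab: "J = arc a b" "a < b" "b - a < pi" "\<exists>m::int. b - a = of_int m * pi / real n"
    using member_grid_arc[OF J] by metis
  obtain k :: int where k: "\<phi> \<le> a + 2 * pi * of_int k" "a + 2 * pi * of_int k < \<phi> + 2 * pi"
    using shift_2pi_into_period by blast
  define X where "X = a + 2 * pi * of_int k - \<phi>"
  define Y where "Y = b + 2 * pi * of_int k - \<phi>"
  have J': "J = arc (X + \<phi>) (Y + \<phi>)" unfolding X_def Y_def ab(1) by (simp add: arc_shift_2pi_int)
  have XY: "X < Y" "Y - X = b - a" "0 \<le> X" "X < 2 * pi" using ab(2) k unfolding X_def Y_def by auto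
  have in_J: "z + \<phi> \<in> J" if "X \<le> z" "z \<le> Y" for z
    unfolding J' using that by (intro arc_memI) auto
  have avoid: "pi / real n \<le> \<bar>z\<bar> \<and> pi / real n \<le> \<bar>z - pi\<bar> \<and> pi / real n \<le> \<bar>z - 2 * pi\<bar>"
    if "X \<le> z" "z \<le> Y" for z
  proof -
    have "z + \<phi> + 2 * pi * of_int (-1) \<in> J" by (rule member_add_2pi_int[OF J in_J[OF that]])
    then show ?thesis using far in_J[OF that] by force
  qed
  note window = interval_avoiding_multiples_of_pi[of "pi / real n" X Y, OF _ XY(3) _ XY(4) avoid]
  show ?thesis
  proof (rule that[OF _ _ in_J])
    show "arc_wave n J \<phi> = square_wave_sum n Y - square_wave_sum n X"
      unfolding J' using XY ab(3) pi_gt_zero by (subst arc_wave_arc) auto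
  qed (use XY ab(4) window n_ge_14 in auto)
qed


lemma far_arc_windows:
  assumes S: "S \<subseteq> \<I>" and far: "\<forall>J\<in>S. \<forall>p\<in>J. pi / real n \<le> \<bar>p - \<phi>\<bar> \<and> pi / real n \<le> \<bar>p - \<phi> - pi\<bar>"
  obtains X Y :: "real set \<Rightarrow> real" where "\<And>J. J \<in> S \<Longrightarrow> X J \<le> Y J"
    "\<And>J. J \<in> S \<Longrightarrow> arc_wave n J \<phi> = square_wave_sum n (Y J) - square_wave_sum n (X J)"
    "\<And>J. J \<in> S \<Longrightarrow> \<exists>m::int. Y J - X J = of_int m * pi / real n"
    "\<And>J. J \<in> S \<Longrightarrow> X J < pi \<Longrightarrow> pi / real n \<le> X J \<and> Y J \<le> pi - pi / real n"
    "\<And>J. J \<in> S \<Longrightarrow> pi \<le> X J \<Longrightarrow> pi + pi / real n \<le> X J \<and> Y J \<le> 2 * pi - pi / real n"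
    "\<And>J J'. J \<in> S \<Longrightarrow> J' \<in> S \<Longrightarrow> J \<noteq> J' \<Longrightarrow> Y J < X J' \<or> Y J' < X J"
proof -
  define window where "window J X Y \<longleftrightarrow> arc_wave n J \<phi> = square_wave_sum n Y - square_wave_sum n X \<and>
      (\<forall>z. X \<le> z \<longrightarrow> z \<le> Y \<longrightarrow> z + \<phi> \<in> J) \<and> X \<le> Y \<and> (\<exists>m::int. Y - X = of_int m * pi / real n) \<and>
      (X < pi \<longrightarrow> pi / real n \<le> X \<and> Y \<le> pi - pi / real n) \<and>
      (pi \<le> X \<longrightarrow> pi + pi / real n \<le> X \<and> Y \<le> 2 * pi - pi / real n)" for J X Y
  have "\<forall>J\<in>S. \<exists>X Y. window J X Y"
  proof
    fix J assume "J \<in> S"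
    then have "J \<in> \<I>" "\<forall>p\<in>J. pi / real n \<le> \<bar>p - \<phi>\<bar> \<and> pi / real n \<le> \<bar>p - \<phi> - pi\<bar>"
      using S far by auto
    then obtain X Y where "X \<le> Y" "arc_wave n J \<phi> = square_wave_sum n Y - square_wave_sum n X"
      "\<And>z. X \<le> z \<Longrightarrow> z \<le> Y \<Longrightarrow> z + \<phi> \<in> J" "\<exists>m::int. Y - X = of_int m * pi / real n"
      "X < pi \<Longrightarrow> pi / real n \<le> X \<and> Y \<le> pi - pi / real n"
      "pi \<le> X \<Longrightarrow> pi + pi / real n \<le> X \<and> Y \<le> 2 * pi - pi / real n"
      by (rule far_arc_window) blast+
    then have "window J X Y" unfolding window_def by blast
    then show "\<exists>X Y. window J X Y" by blast
  qed
  then obtain X Y where W: "\<And>J. J \<in> S \<Longrightarrow> window J (X J) (Y J)" by metis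
  have wave: "arc_wave n J \<phi> = square_wave_sum n (Y J) - square_wave_sum n (X J)"
    and mem: "X J \<le> z \<Longrightarrow> z \<le> Y J \<Longrightarrow> z + \<phi> \<in> J"
    and le: "X J \<le> Y J" and grid: "\<exists>m::int. Y J - X J = of_int m * pi / real n"
    and lower_half: "X J < pi \<Longrightarrow> pi / real n \<le> X J \<and> Y J \<le> pi - pi / real n"
    and upper_half: "pi \<le> X J \<Longrightarrow> pi + pi / real n \<le> X J \<and> Y J \<le> 2 * pi - pi / real n"
    if "J \<in> S" for J z
    using W[OF that] unfolding window_def by blast+
  have disj: "Y J < X J' \<or> Y J' < X J" if "J \<in> S" "J' \<in> S" "J \<noteq> J'" for J J'
  proof (rule ccontr)
    assume "\<not> (Y J < X J' \<or> Y J' < X J)"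
    then have "max (X J) (X J') + \<phi> \<in> J" "max (X J) (X J') + \<phi> \<in> J'"
      using mem[OF that(1)] mem[OF that(2)] le[OF that(1)] le[OF that(2)] by auto
    then show False using disjoint_arcs that S by blast
  qed
  show ?thesis by (rule that; fact)
qed

lemma far_arcs_sum:
  assumes S: "S \<subseteq> \<I>" and far: "\<forall>J\<in>S. \<forall>p\<in>J. pi / real n \<le> \<bar>p - \<phi>\<bar> \<and> pi / real n \<le> \<bar>p - \<phi> - pi\<bar>"
  shows "(\<Sum>J\<in>S. \<bar>arc_wave n J \<phi>\<bar>) \<le> 2 / pi"
proof -
  obtain X Y where le: "\<And>J. J \<in> S \<Longrightarrow> X J \<le> Y J"
    and wave: "\<And>J. J \<in> S \<Longrightarrow> arc_wave n J \<phi> = square_wave_sum n (Y J) - square_wave_sum n (X J)"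
    and grid: "\<And>J. J \<in> S \<Longrightarrow> \<exists>m::int. Y J - X J = of_int m * pi / real n"
    and lower_half: "\<And>J. J \<in> S \<Longrightarrow> X J < pi \<Longrightarrow> pi / real n \<le> X J \<and> Y J \<le> pi - pi / real n"
    and upper_half: "\<And>J. J \<in> S \<Longrightarrow> pi \<le> X J \<Longrightarrow> pi + pi / real n \<le> X J \<and> Y J \<le> 2 * pi - pi / real n"
    and disj: "\<And>J J'. J \<in> S \<Longrightarrow> J' \<in> S \<Longrightarrow> J \<noteq> J' \<Longrightarrow> Y J < X J' \<or> Y J' < X J"
    by (rule far_arc_windows[OF S far]) blast
  define SA where "SA = {J\<in>S. X J < pi}"
  have fin: "finite S" using S finite_arcs finite_subset by blast
  have "(\<Sum>J\<in>SA. \<bar>arc_wave n J \<phi>\<bar>) = (\<Sum>J\<in>SA. \<bar>square_wave_sum n (Y J) - square_wave_sum n (X J)\<bar>)"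
    using wave unfolding SA_def by simp
  also have "\<dots> \<le> 1 / pi"
  proof (rule square_wave_sum_far_family)
    show "\<forall>J\<in>SA. pi / real n \<le> X J \<and> X J \<le> Y J \<and> Y J \<le> pi - pi / real n \<and>
        (\<exists>m::int. Y J - X J = of_int m * pi / real n)"
      using lower_half le grid unfolding SA_def by blast
  qed (use n_ge_14 fin disj in \<open>auto simp: SA_def\<close>)
  finally have A: "(\<Sum>J\<in>SA. \<bar>arc_wave n J \<phi>\<bar>) \<le> 1 / pi" .
  have "(\<Sum>J\<in>S - SA. \<bar>arc_wave n J \<phi>\<bar>)
      = (\<Sum>J\<in>S - SA. \<bar>square_wave_sum n (Y J - pi) - square_wave_sum n (X J - pi)\<bar>)"
    using wave by (intro sum.cong refl) (simp add: square_wave_sum_diff_pi abs_minus_commute)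
  also have "\<dots> \<le> 1 / pi"
  proof (rule square_wave_sum_far_family)
    show "\<forall>J\<in>S - SA. pi / real n \<le> X J - pi \<and> X J - pi \<le> Y J - pi \<and> Y J - pi \<le> pi - pi / real n \<and>
        (\<exists>m::int. Y J - pi - (X J - pi) = of_int m * pi / real n)"
    proof
      fix J assume J: "J \<in> S - SA"
      then have "pi + pi / real n \<le> X J \<and> Y J \<le> 2 * pi - pi / real n" using upper_half unfolding SA_def by auto
      then show "pi / real n \<le> X J - pi \<and> X J - pi \<le> Y J - pi \<and> Y J - pi \<le> pi - pi / real n \<and>
          (\<exists>m::int. Y J - pi - (X J - pi) = of_int m * pi / real n)"
        using le[of J] grid[of J] J by auto
    qed
    show "\<forall>J\<in>S - SA. \<forall>J'\<in>S - SA. J \<noteq> J' \<longrightarrow> Y J - pi < X J' - pi \<or> Y J' - pi < X J - pi"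
      using disj by auto
  qed (use n_ge_14 fin in auto)
  finally have B: "(\<Sum>J\<in>S - SA. \<bar>arc_wave n J \<phi>\<bar>) \<le> 1 / pi" .
  have "(\<Sum>J\<in>S. \<bar>arc_wave n J \<phi>\<bar>) = (\<Sum>J\<in>SA. \<bar>arc_wave n J \<phi>\<bar>) + (\<Sum>J\<in>S - SA. \<bar>arc_wave n J \<phi>\<bar>)"
    using sum.subset_diff[of SA S "\<lambda>J. \<bar>arc_wave n J \<phi>\<bar>"] fin unfolding SA_def by (auto simp: add.commute)
  then show ?thesis using A B by simp
qed

lemma arc_wave_at_member_abs_le:
  assumes "J \<in> \<I>" "\<phi> \<in> J"
  shows "\<bar>arc_wave n J \<phi>\<bar> \<le> 2"
proof -
  obtain a b where ab: "a \<le> \<phi>" "\<phi> \<le> b" "b - a \<le> 6 * pi / real n"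
    "arc_wave n J \<phi> = square_wave_sum n (b - \<phi>) - square_wave_sum n (a - \<phi>)"
    using arc_around[OF assms] by metis
  have "6 * pi / real n \<le> 7 * pi / real n" by (simp add: divide_right_mono)
  then have "b - \<phi> \<le> 7 * pi / real n" "- (7 * pi / real n) \<le> a - \<phi>" using ab by linarith+
  then have "0 \<le> square_wave_sum n (b - \<phi>) \<and> square_wave_sum n (b - \<phi>) \<le> 1"
    "- 1 \<le> square_wave_sum n (a - \<phi>) \<and> square_wave_sum n (a - \<phi>) \<le> 0"
    using ab square_wave_sum_small_pos[OF n_ge_14] square_wave_sum_small_neg[OF n_ge_14] by auto
  then show ?thesis using ab(4) by simp
qed

lemma arc_wave_near_abs_le:
  assumes J: "J \<in> \<I>" "p \<in> J" and p: "\<bar>p - \<phi>\<bar> < pi / real n" and "\<phi> \<notin> J"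
  shows "\<bar>arc_wave n J \<phi>\<bar> \<le> 1"
proof -
  obtain a b where ab: "a \<le> p" "p \<le> b" "b - a \<le> 6 * pi / real n"
    "arc_wave n J \<phi> = square_wave_sum n (b - \<phi>) - square_wave_sum n (a - \<phi>)"
    "\<And>z. a \<le> z \<Longrightarrow> z \<le> b \<Longrightarrow> z \<in> J"
    using arc_around[OF J] by metis
  have "\<phi> < a \<or> b < \<phi>" using ab(5)[of \<phi>] \<open>\<phi> \<notin> J\<close> by linarith
  moreover have "pi / real n + 6 * pi / real n = 7 * pi / real n" by (simp add: field_simps)
  ultimately consider "0 \<le> a - \<phi>" "b - \<phi> \<le> 7 * pi / real n" | "- (7 * pi / real n) \<le> a - \<phi>" "b - \<phi> \<le> 0"
    using ab p by (auto simp: abs_less_iff)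
  then show ?thesis
  proof cases
    case 1
    then have "0 \<le> square_wave_sum n (x - \<phi>) \<and> square_wave_sum n (x - \<phi>) \<le> 1" if "x \<in> {a, b}" for x
      using that ab n_ge_14 by (intro square_wave_sum_small_pos) auto
    from this[of a] this[of b] show ?thesis using ab(4) by (simp add: abs_le_iff)
  next
    case 2
    then have "- 1 \<le> square_wave_sum n (x - \<phi>) \<and> square_wave_sum n (x - \<phi>) \<le> 0" if "x \<in> {a, b}" for x
      using that ab n_ge_14 by (intro square_wave_sum_small_neg) auto
    from this[of a] this[of b] show ?thesis using ab(4) by (simp add: abs_le_iff)
  qed
qed

lemma arcs_meeting_short_interval:
  assumes S: "S \<subseteq> \<I>"
  shows "card {J\<in>S. \<exists>q\<in>J. l < q \<and> q < l + pi / real n} \<le> 1" (is "card ?A \<le> 1")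
proof -
  have "J = J'" if A: "J \<in> ?A" "J' \<in> ?A" for J J'
  proof -
    obtain q q' where q: "q \<in> J" "q' \<in> J'" "l < q" "q < l + pi / real n" "l < q'" "q' < l + pi / real n"
      using A by blast
    then have "\<bar>q - q'\<bar> < pi / real n" by (simp add: abs_less_iff)
    moreover have "J \<in> \<I>" "J' \<in> \<I>" using A S by auto
    ultimately show ?thesis using same_arc_if_close q(1,2) by metis
  qed
  moreover have "finite S" using S finite_arcs finite_subset by blast
  then have "finite ?A" by simp
  ultimately show ?thesis using card_le_Suc0_iff_eq[of ?A] by auto
qed

text \<open>By separation, an arc of \<open>\<I>\<close> containing \<open>\<phi>\<close> is the only arc within \<open>pi / n\<close> of \<open>\<phi>\<close>;
  otherwise at most one arc comes that close from each side.\<close>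

lemma near_arcs_sum:
  assumes S: "S \<subseteq> \<I>" and near: "\<forall>J\<in>S. \<exists>p\<in>J. \<bar>p - \<phi>\<bar> < pi / real n"
  shows "(\<Sum>J\<in>S. \<bar>arc_wave n J \<phi>\<bar>) \<le> 2"
proof -
  have fin: "finite S" using S finite_arcs finite_subset by blast
  show ?thesis
  proof (cases "\<exists>J0\<in>S. \<phi> \<in> J0")
    case True
    then obtain J0 where J0: "J0 \<in> S" "\<phi> \<in> J0" by blast
    have "J = J0" if J: "J \<in> S" for J
    proof -
      obtain p where "p \<in> J" "\<bar>p - \<phi>\<bar> < pi / real n" using near J by blast
      moreover have "J \<in> \<I>" "J0 \<in> \<I>" using J J0 S by auto
      ultimately show ?thesis using same_arc_if_close J0(2) by metis
    qed
    then have "S = {J0}" using J0 by blast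
    then show ?thesis using arc_wave_at_member_abs_le J0 S by auto
  next
    case False
    define R where "R = {J\<in>S. \<exists>q\<in>J. \<phi> < q \<and> q < \<phi> + pi / real n}"
    define L where "L = {J\<in>S. \<exists>q\<in>J. \<phi> - pi / real n < q \<and> q < \<phi>}"
    have "S \<subseteq> R \<union> L"
    proof
      fix J assume J: "J \<in> S"
      then obtain p where p: "p \<in> J" "\<bar>p - \<phi>\<bar> < pi / real n" using near by blast
      have "p \<noteq> \<phi>" using False J p by blast
      then have "\<phi> < p \<or> p < \<phi>" by linarith
      then show "J \<in> R \<union> L"
      proof
        assume "\<phi> < p"
        then have "J \<in> R" unfolding R_def using J p by (auto intro!: bexI[of _ p] simp: abs_less_iff)
        then show ?thesis by blast
      next
        assume "p < \<phi>"
        then have "J \<in> L" unfolding L_def using J p by (auto intro!: bexI[of _ p] simp: abs_less_iff)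
        then show ?thesis by blast
      qed
    qed
    then have "card S \<le> card (R \<union> L)" by (rule card_mono[rotated]) (use fin in \<open>simp add: R_def L_def\<close>)
    then have "card S \<le> card R + card L" using card_Un_le[of R L] by linarith
    moreover have "(\<Sum>J\<in>S. \<bar>arc_wave n J \<phi>\<bar>) \<le> real (card S) * 1"
    proof (rule sum_bounded_above)
      fix J assume "J \<in> S"
      then obtain p where "p \<in> J" "\<bar>p - \<phi>\<bar> < pi / real n" using near by blast
      then show "\<bar>arc_wave n J \<phi>\<bar> \<le> 1" using arc_wave_near_abs_le False S \<open>J \<in> S\<close> by blast
    qed
    ultimately show ?thesis
      using arcs_meeting_short_interval[OF S, of \<phi>] arcs_meeting_short_interval[OF S, of "\<phi> - pi / real n"]
      unfolding R_def L_def by simp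
  qed
qed

theorem family_wave_abs_le:
  assumes \<alpha>: "\<forall>J\<in>\<I>. \<bar>\<alpha> J\<bar> \<le> 1"
  shows "\<bar>family_wave n \<I> \<alpha> \<phi>\<bar> \<le> 5"
proof -
  define A where "A = {J\<in>\<I>. \<exists>p\<in>J. \<bar>p - \<phi>\<bar> < pi / real n}"
  define B where "B = {J\<in>\<I>. \<exists>p\<in>J. \<bar>p - (\<phi> + pi)\<bar> < pi / real n} - A"
  define C where "C = \<I> - A - B"
  let ?c = "\<lambda>J. \<bar>arc_wave n J \<phi>\<bar>"
  have split: "sum ?c \<I> = sum ?c A + sum ?c B + sum ?c C"
  proof -
    have "A \<subseteq> \<I>" "B \<subseteq> \<I> - A" unfolding A_def B_def by auto
    then show ?thesis
      using sum.subset_diff[of A \<I> ?c] sum.subset_diff[of B "\<I> - A" ?c] finite_arcs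
      unfolding C_def by simp
  qed
  have "\<bar>family_wave n \<I> \<alpha> \<phi>\<bar> \<le> sum ?c \<I>"
    unfolding family_wave_def
  proof (rule order_trans[OF sum_abs sum_mono])
    fix J assume "J \<in> \<I>"
    then show "\<bar>\<alpha> J * arc_wave n J \<phi>\<bar> \<le> \<bar>arc_wave n J \<phi>\<bar>"
      using \<alpha> by (simp add: abs_mult mult_left_le_one_le)
  qed
  also have "\<dots> \<le> 2 + 2 + 2 / pi"
    unfolding split
  proof (intro add_mono)
    show "sum ?c A \<le> 2" by (rule near_arcs_sum) (auto simp: A_def)
    have "sum ?c B = (\<Sum>J\<in>B. \<bar>arc_wave n J (\<phi> + pi)\<bar>)"
      by (simp add: arc_wave_add_pi)
    also have "\<dots> \<le> 2" by (rule near_arcs_sum) (auto simp: B_def)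
    finally show "sum ?c B \<le> 2" .
    show "sum ?c C \<le> 2 / pi"
    proof (rule far_arcs_sum)
      show "C \<subseteq> \<I>" unfolding C_def by blast
      show "\<forall>J\<in>C. \<forall>p\<in>J. pi / real n \<le> \<bar>p - \<phi>\<bar> \<and> pi / real n \<le> \<bar>p - \<phi> - pi\<bar>"
        unfolding C_def A_def B_def by (auto simp: not_less diff_diff_eq)
    qed
  qed
  also have "\<dots> \<le> 5" using pi_gt3 by (simp add: field_simps)
  finally show ?thesis .
qed

text \<open>With \<open>u = \<theta> - a\<close> and \<open>v = b - \<theta>\<close> the response is \<open>square_wave_sum n u + square_wave_sum n v\<close>;
  both terms are nonnegative and the one with the larger argument, at least \<open>pi / (2 n)\<close>, is already
  bounded below by the value at the second node.\<close>

lemma arc_wave_at_member_ge: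
  assumes "J \<in> \<I>" "\<theta> \<in> J"
  shows "1/3 + 1/pi \<le> arc_wave n J \<theta>"
proof -
  obtain a b where ab: "a \<le> \<theta>" "\<theta> \<le> b" "pi / real n \<le> b - a" "b - a \<le> 6 * pi / real n"
    "arc_wave n J \<theta> = square_wave_sum n (b - \<theta>) - square_wave_sum n (a - \<theta>)"
    using arc_around[OF assms] by metis
  define u where "u = \<theta> - a"
  define v where "v = b - \<theta>"
  have wave: "arc_wave n J \<theta> = square_wave_sum n u + square_wave_sum n v"
    using ab(5) square_wave_sum_minus[of n u] unfolding u_def v_def by simp
  have "6 * pi / real n \<le> pi / 2" using n_ge_14 by (simp add: field_simps)
  then have uv: "0 \<le> u" "u \<le> pi / 2" "0 \<le> v" "v \<le> pi / 2"
    using ab unfolding u_def v_def by auto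
  have "pi / real n \<le> u + v" using ab unfolding u_def v_def by simp
  then have "lobe_node n 1 \<le> max u v"
    unfolding lobe_node_def by (simp add: field_simps max_def)
  then have "square_wave_sum n (lobe_node n 2) \<le> square_wave_sum n u \<or>
      square_wave_sum n (lobe_node n 2) \<le> square_wave_sum n v"
    using square_wave_sum_quarter_period_bounds(3)[of n] n_ge_14 uv by (auto simp: max_def split: if_splits)
  moreover have "0 \<le> square_wave_sum n u" "0 \<le> square_wave_sum n v"
    using square_wave_sum_quarter_period_bounds(1)[of n] n_ge_14 uv by auto
  moreover have "1/3 + 1/pi \<le> square_wave_sum n (lobe_node n 2)"
    using square_wave_sum_second_node_ge n_ge_14 by simp
  ultimately show ?thesis unfolding wave by linarith
qed

text \<open>The arcs \<open>I\<close> and \<open>pi + I\<close> contribute equally at \<open>\<theta>\<close>; every other arc is at distance at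
  least \<open>pi / n\<close> from both \<open>\<theta>\<close> and \<open>\<theta> + pi\<close>.\<close>

theorem family_wave_at_member_ge:
  assumes I: "I \<in> \<I>" "\<theta> \<in> I" and \<alpha>: "\<forall>J\<in>\<I>. \<bar>\<alpha> J\<bar> \<le> 1" "\<bar>\<alpha> I\<bar> = 1"
    and \<alpha>_shift: "\<alpha> ((\<lambda>x. pi + x) ` I) = - \<alpha> I"
  shows "2 / 3 \<le> \<alpha> I * family_wave n \<I> \<alpha> \<theta>"
proof -
  define I' where "I' = (\<lambda>x. pi + x) ` I"
  have I': "I' \<in> \<I>" "I' \<noteq> I" "\<theta> + pi \<in> I'"
    unfolding I'_def using shift_pi_mem[OF I(1)] shift_pi_ne[OF I(1)] I(2) by (auto simp: add.commute)
  define R where "R = \<I> - {I, I'}"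
  let ?f = "\<lambda>J. \<alpha> J * arc_wave n J \<theta>"
  have "family_wave n \<I> \<alpha> \<theta> = sum ?f R + (?f I + ?f I')"
    unfolding family_wave_def R_def using sum.subset_diff[of "{I, I'}" \<I> ?f] finite_arcs I I' by auto
  also have "?f I + ?f I' = 2 * \<alpha> I * arc_wave n I \<theta>"
    using \<alpha>_shift arc_wave_shift_pi[OF I(1)] unfolding I'_def by simp
  finally have split: "\<alpha> I * family_wave n \<I> \<alpha> \<theta> = 2 * arc_wave n I \<theta> + \<alpha> I * sum ?f R"
    using \<alpha>(2) by (simp add: algebra_simps abs_if split: if_splits)
  have "\<bar>\<alpha> I * sum ?f R\<bar> \<le> (\<Sum>J\<in>R. \<bar>arc_wave n J \<theta>\<bar>)"
    using \<alpha> unfolding R_def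
    by (auto simp: abs_mult intro!: order_trans[OF sum_abs sum_mono] mult_left_le_one_le)
  also have "\<dots> \<le> 2 / pi"
  proof (rule far_arcs_sum)
    show "R \<subseteq> \<I>" unfolding R_def by blast
    show "\<forall>J\<in>R. \<forall>p\<in>J. pi / real n \<le> \<bar>p - \<theta>\<bar> \<and> pi / real n \<le> \<bar>p - \<theta> - pi\<bar>"
      using separated[OF _ I(1) _ _ I(2)] separated[OF _ I'(1) _ _ I'(3)]
      unfolding R_def by (auto simp: diff_diff_eq)
  qed
  finally have "- (2 / pi) \<le> \<alpha> I * sum ?f R" by linarith
  moreover have "1/3 + 1/pi \<le> arc_wave n I \<theta>" by (rule arc_wave_at_member_ge[OF I])
  ultimately show ?thesis unfolding split by simp
qed

end

section \<open>Sine coefficients of arcs\<close>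

lemma sin_has_integral_interval:
  assumes j: "j > 0" and cd: "c \<le> d"
  shows "((\<lambda>x. sin (real j * x)) has_integral (cos (real j * c) - cos (real j * d)) / real j) {c..d}"
proof -
  have "((\<lambda>x. sin (real j * x)) has_integral (- cos (real j * d) / real j) - (- cos (real j * c) / real j)) {c..d}"
  proof (rule fundamental_theorem_of_calculus[OF cd])
    fix x assume "x \<in> {c..d}"
    have "((\<lambda>x. - cos (real j * x) / real j) has_real_derivative sin (real j * x)) (at x within {c..d})"
      using j by (auto intro!: derivative_eq_intros)
    then show "((\<lambda>x. - cos (real j * x) / real j) has_vector_derivative sin (real j * x)) (at x within {c..d})"
      by (simp add: has_real_derivative_iff_has_vector_derivative)
  qed
  then show ?thesis by (simp add: diff_divide_distrib)
qed

lemma indicator_sin_has_integral: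
  assumes j: "j > 0" and "-pi \<le> c" "d \<le> pi"
  shows "((\<lambda>x. indicator {c..d} x * sin (real j * x)) has_integral
          (if c \<le> d then (cos (real j * c) - cos (real j * d)) / real j else 0)) {-pi..pi}"
proof (cases "c \<le> d")
  case True
  have e: "(\<lambda>x. indicator {c..d} x * sin (real j * x)) = (\<lambda>x. if x \<in> {c..d} then sin (real j * x) else 0)"
    by (auto simp: indicator_def)
  have "{c..d} \<inter> {-pi..pi} = {c..d}" using assms by auto
  then show ?thesis
    unfolding e has_integral_restrict_Int using sin_has_integral_interval[OF j True] True by simp
qed simp

lemma indicator_arc_on_period:
  assumes a: "-pi < a" "a \<le> pi" and ab: "a < b" "b < a + 2 * pi" and x: "-pi \<le> x" "x \<le> pi"
  shows "indicator (arc a b) x = indicator {a..min b pi} x + (indicator {-pi..b - 2 * pi} x :: real)"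
proof -
  have "x \<in> arc a b \<longleftrightarrow> x \<in> {a..min b pi} \<or> x \<in> {-pi..b - 2 * pi}"
  proof (cases "a \<le> x")
    case True
    then show ?thesis using mem_arc_window_iff[OF ab True] a ab x by auto
  next
    case False
    have "x \<in> arc a b \<longleftrightarrow> x + 2 * pi * of_int 1 \<in> arc a b"
      using arc_add_2pi_int[of x a b 1] arc_add_2pi_int[of "x + 2 * pi * of_int 1" a b "-1"] by auto
    also have "\<dots> \<longleftrightarrow> x + 2 * pi \<le> b" using mem_arc_window_iff[OF ab, of "x + 2 * pi"] False a x by simp
    finally show ?thesis using False x by auto
  qed
  moreover have "\<not> (x \<in> {a..min b pi} \<and> x \<in> {-pi..b - 2 * pi})" using ab by auto
  ultimately show ?thesis by (auto simp: indicator_def)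
qed

lemma cos_times_add_2pi_int: "cos (real j * (x + 2 * pi * of_int k)) = cos (real j * x)"
proof -
  have "real j * (x + 2 * pi * of_int k) = real j * x + 2 * pi * of_int (int j * k)"
    by (simp add: algebra_simps)
  then show ?thesis by (simp only: cos_add cos_int_2pin sin_int_2pin)
qed

lemma arc_sine_coefficient:
  assumes j: "j > 0" and ab: "a < b" "b - a < 2 * pi"
  shows "((\<lambda>x. indicator (arc a b) x * sin (real j * x)) has_integral
           (cos (real j * a) - cos (real j * b)) / real j) {-pi..pi}"
proof -
  obtain k :: int where k: "-pi \<le> - a + 2 * pi * of_int k" "- a + 2 * pi * of_int k < pi"
    using shift_2pi_into_period[of "-pi" "-a"] by auto
  define a' where "a' = a + 2 * pi * of_int (-k)"
  define b' where "b' = b + 2 * pi * of_int (-k)"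
  have a': "-pi < a'" "a' \<le> pi" "a' < b'" "b' < a' + 2 * pi" using k ab unfolding a'_def b'_def by auto
  have "arc a b = arc a' b'" unfolding a'_def b'_def arc_shift_2pi_int ..
  then have "((\<lambda>x. indicator (arc a b) x * sin (real j * x)) has_integral
      (cos (real j * a') - cos (real j * min b' pi)) / real j +
      (if -pi \<le> b' - 2 * pi then (cos (real j * (-pi)) - cos (real j * (b' - 2 * pi))) / real j else 0)) {-pi..pi}"
    using has_integral_add[OF indicator_sin_has_integral[OF j, of a' "min b' pi"]
        indicator_sin_has_integral[OF j, of "-pi" "b' - 2 * pi"]] a'
    by (rule_tac has_integral_eq[rotated]) (auto simp: indicator_arc_on_period distrib_right)
  also have "(cos (real j * a') - cos (real j * min b' pi)) / real j +
      (if -pi \<le> b' - 2 * pi then (cos (real j * (-pi)) - cos (real j * (b' - 2 * pi))) / real j else 0)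
    = (cos (real j * a') - cos (real j * b')) / real j"
    using cos_times_add_2pi_int[of j "b' - 2 * pi" 1] a' by (auto simp: min_def diff_divide_distrib)
  also have "\<dots> = (cos (real j * a) - cos (real j * b)) / real j"
    unfolding a'_def b'_def cos_times_add_2pi_int ..
  finally show ?thesis .
qed

lemma S_o_eq_image: "S_o n = (\<lambda>k. 2 * k + 1) ` {..<n}"
proof (intro set_eqI iffI)
  fix j assume "j \<in> S_o n"
  then have j: "odd j" "j \<le> 2 * n - 1" by (auto simp: S_o_def)
  then obtain k where "j = 2 * k + 1" by (metis oddE)
  with j show "j \<in> (\<lambda>k. 2 * k + 1) ` {..<n}" by auto
qed (auto simp: S_o_def)

lemma sum_S_o: "(\<Sum>j\<in>S_o n. f j) = (\<Sum>k<n. f (2 * k + 1))"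
  unfolding S_o_eq_image by (subst sum.reindex) (auto simp: inj_on_def)

lemma arc_sine_series:
  assumes ab: "a < b" "b - a < 2 * pi"
  shows "(\<Sum>j\<in>S_o n. integral {-pi..pi} (\<lambda>x. indicator (arc a b) x * sin (real j * x)) * sin (real j * \<theta>))
       = (arc_wave n (arc a b) \<theta> - arc_wave n (arc a b) (-\<theta>)) / 2"
proof -
  have summand: "integral {-pi..pi} (\<lambda>x. indicator (arc a b) x * sin (real j * x)) * sin (real j * \<theta>)
      = (sin (real j * (b - \<theta>)) / real j - sin (real j * (a - \<theta>)) / real j
         - (sin (real j * (b + \<theta>)) / real j - sin (real j * (a + \<theta>)) / real j)) / 2"
    if "j > 0" for j
  proof -
    have "integral {-pi..pi} (\<lambda>x. indicator (arc a b) x * sin (real j * x)) * sin (real j * \<theta>)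
        = ((cos (real j * a) - cos (real j * b)) * sin (real j * \<theta>)) / real j"
      using integral_unique[OF arc_sine_coefficient[OF that ab]] by simp
    also have "(cos (real j * a) - cos (real j * b)) * sin (real j * \<theta>)
        = (sin (real j * (b - \<theta>)) - sin (real j * (a - \<theta>)) - (sin (real j * (b + \<theta>)) - sin (real j * (a + \<theta>)))) / 2"
      by (simp add: right_diff_distrib distrib_left sin_diff sin_add algebra_simps)
    finally show ?thesis by (simp add: diff_divide_distrib)
  qed
  have "(\<Sum>j\<in>S_o n. integral {-pi..pi} (\<lambda>x. indicator (arc a b) x * sin (real j * x)) * sin (real j * \<theta>))
      = (\<Sum>k<n. (sin (real (2*k+1) * (b - \<theta>)) / real (2*k+1) - sin (real (2*k+1) * (a - \<theta>)) / real (2*k+1)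
         - (sin (real (2*k+1) * (b + \<theta>)) / real (2*k+1) - sin (real (2*k+1) * (a + \<theta>)) / real (2*k+1))) / 2)"
    unfolding sum_S_o by (intro sum.cong refl summand) simp
  also have "\<dots> = ((square_wave_sum n (b - \<theta>) - square_wave_sum n (a - \<theta>))
         - (square_wave_sum n (b + \<theta>) - square_wave_sum n (a + \<theta>))) / 2"
    unfolding square_wave_sum_def by (simp add: sum_divide_distrib[symmetric] sum_subtractf)
  finally have "(\<Sum>j\<in>S_o n. integral {-pi..pi} (\<lambda>x. indicator (arc a b) x * sin (real j * x)) * sin (real j * \<theta>))
      = ((square_wave_sum n (b - \<theta>) - square_wave_sum n (a - \<theta>))
         - (square_wave_sum n (b + \<theta>) - square_wave_sum n (a + \<theta>))) / 2" .
  then show ?thesis using ab by (simp add: arc_wave_arc)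
qed

theorem s_hat_eq_family_wave:
  assumes fin: "finite \<I>" and arcs: "\<forall>J\<in>\<I>. is_arc J"
  shows "s_hat n \<I> \<alpha> \<theta> = K * sqrt (real n) * (family_wave n \<I> \<alpha> \<theta> - family_wave n \<I> \<alpha> (-\<theta>)) / 2"
proof -
  let ?c = "\<lambda>J j. integral {-pi..pi} (\<lambda>x. indicator J x * sin (real j * x))"
  have coefficient: "integral {-pi..pi} (\<lambda>\<theta>. g_col \<I> \<alpha> \<theta> * sin (real j * \<theta>)) = (\<Sum>J\<in>\<I>. \<alpha> J * ?c J j)"
    if "j \<in> S_o n" for j
  proof -
    have "(\<lambda>x. indicator J x * sin (real j * x)) integrable_on {-pi..pi}" if "J \<in> \<I>" for J
    proof -
      have "is_arc J" using arcs \<open>J \<in> \<I>\<close> by blast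
      then obtain a b where ab: "a < b" "b - a < 2 * pi" "J = arc a b" unfolding is_arc_def by auto
      have "j > 0" using \<open>j \<in> S_o n\<close> by (simp add: S_o_def)
      from arc_sine_coefficient[OF this ab(1,2)] show ?thesis unfolding ab(3) by (rule has_integral_integrable)
    qed
    then have "((\<lambda>x. \<Sum>J\<in>\<I>. \<alpha> J * (indicator J x * sin (real j * x))) has_integral (\<Sum>J\<in>\<I>. \<alpha> J * ?c J j)) {-pi..pi}"
      by (intro has_integral_sum[OF fin] has_integral_mult_right integrable_integral)
    moreover have "(\<lambda>\<theta>. g_col \<I> \<alpha> \<theta> * sin (real j * \<theta>)) = (\<lambda>x. \<Sum>J\<in>\<I>. \<alpha> J * (indicator J x * sin (real j * x)))"
      unfolding g_col_def by (simp add: sum_distrib_right mult.assoc)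
    ultimately show ?thesis by (simp add: integral_unique)
  qed
  have series: "(\<Sum>j\<in>S_o n. ?c J j * sin (real j * \<theta>)) = (arc_wave n J \<theta> - arc_wave n J (-\<theta>)) / 2"
    if "J \<in> \<I>" for J
  proof -
    have "is_arc J" using arcs that by blast
    then obtain a b where "a < b" "b - a < 2 * pi" "J = arc a b" unfolding is_arc_def by auto
    then show ?thesis using arc_sine_series by simp
  qed
  have "s_hat n \<I> \<alpha> \<theta> = (\<Sum>j\<in>S_o n. K * sqrt (real n) * (\<Sum>J\<in>\<I>. \<alpha> J * ?c J j) * sin (real j * \<theta>))"
    unfolding s_hat_def eps_hat_def by (intro sum.cong refl) (simp add: coefficient)
  also have "\<dots> = K * sqrt (real n) * (\<Sum>j\<in>S_o n. \<Sum>J\<in>\<I>. \<alpha> J * (?c J j * sin (real j * \<theta>)))"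
    by (simp add: sum_distrib_left sum_distrib_right mult.assoc)
  also have "\<dots> = K * sqrt (real n) * (\<Sum>J\<in>\<I>. \<alpha> J * (\<Sum>j\<in>S_o n. ?c J j * sin (real j * \<theta>)))"
    by (simp add: sum.swap[of _ "S_o n"] sum_distrib_left)
  also have "\<dots> = K * sqrt (real n) * (\<Sum>J\<in>\<I>. \<alpha> J * ((arc_wave n J \<theta> - arc_wave n J (-\<theta>)) / 2))"
    by (intro arg_cong[where f = "\<lambda>x. K * sqrt (real n) * x"] sum.cong refl) (simp add: series)
  also have "\<dots> = K * sqrt (real n) * (family_wave n \<I> \<alpha> \<theta> - family_wave n \<I> \<alpha> (-\<theta>)) / 2"
    unfolding family_wave_def
    by (simp add: right_diff_distrib sum_subtractf sum_divide_distrib[symmetric])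
  finally show ?thesis .
qed

theorem (in separated_arcs) s_hat_bounds:
  assumes reflect_mem: "\<forall>I\<in>\<I>. (\<lambda>\<theta>. pi - \<theta>) ` I \<in> \<I>" and \<alpha>: "symmetric_colouring \<I> \<alpha>"
  shows "(\<forall>\<theta>\<in>\<Union>\<I>. 2 * K * sqrt (real n) / 3 \<le> \<bar>s_hat n \<I> \<alpha> \<theta>\<bar>) \<and>
         (\<forall>\<theta>. \<bar>s_hat n \<I> \<alpha> \<theta>\<bar> \<le> 5 * K * sqrt (real n))"
proof -
  have \<alpha>_unit: "\<forall>J\<in>\<I>. \<bar>\<alpha> J\<bar> = 1" and \<alpha>_le: "\<forall>J\<in>\<I>. \<bar>\<alpha> J\<bar> \<le> 1"
    and \<alpha>_reflect: "\<forall>J\<in>\<I>. \<alpha> ((\<lambda>\<theta>. pi - \<theta>) ` J) = \<alpha> J"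
    and \<alpha>_shift: "\<forall>J\<in>\<I>. \<alpha> ((\<lambda>\<theta>. pi + \<theta>) ` J) = - \<alpha> J"
    using \<alpha> unfolding symmetric_colouring_def by auto
  have "is_arc J" if J: "J \<in> \<I>" for J
  proof -
    obtain a b where "J = arc a b" "a < b" "b - a < pi" using member_grid_arc[OF J] by metis
    then show ?thesis unfolding is_arc_def using pi_gt_zero by (intro exI[of _ a] exI[of _ b]) auto
  qed
  then have s_hat: "s_hat n \<I> \<alpha> \<theta> = K * sqrt (real n) * (family_wave n \<I> \<alpha> \<theta> - family_wave n \<I> \<alpha> (-\<theta>)) / 2" for \<theta>
    using s_hat_eq_family_wave finite_arcs by blast
  have K: "0 < K * sqrt (real n)" using n_ge_14 by (simp add: K_def)
  have abs_s_hat: "\<bar>s_hat n \<I> \<alpha> \<theta>\<bar> = K * sqrt (real n) * \<bar>family_wave n \<I> \<alpha> \<theta> - family_wave n \<I> \<alpha> (-\<theta>)\<bar> / 2" for \<theta>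
    unfolding s_hat by (simp add: abs_mult K_def)
  have "\<bar>s_hat n \<I> \<alpha> \<theta>\<bar> \<le> 5 * K * sqrt (real n)" for \<theta>
  proof -
    have "\<bar>family_wave n \<I> \<alpha> \<theta> - family_wave n \<I> \<alpha> (-\<theta>)\<bar> \<le> 10"
      using family_wave_abs_le[OF \<alpha>_le, of \<theta>] family_wave_abs_le[OF \<alpha>_le, of "-\<theta>"] by linarith
    then show ?thesis unfolding abs_s_hat using mult_left_mono[OF _ less_imp_le[OF K]] by fastforce
  qed
  moreover have "2 * K * sqrt (real n) / 3 \<le> \<bar>s_hat n \<I> \<alpha> \<theta>\<bar>" if \<theta>: "\<theta> \<in> \<Union>\<I>" for \<theta>
  proof -
    obtain I where I: "I \<in> \<I>" "\<theta> \<in> I" using \<theta> by blast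
    define I' where "I' = (\<lambda>x. pi - x) ` ((\<lambda>x. pi + x) ` I)"
    have I1: "(\<lambda>x. pi + x) ` I \<in> \<I>" by (rule shift_pi_mem[OF I(1)])
    then have I': "I' \<in> \<I>" unfolding I'_def using reflect_mem by blast
    have "pi + \<theta> \<in> (\<lambda>x. pi + x) ` I" using I(2) by (rule imageI)
    then have "-\<theta> \<in> I'" unfolding I'_def by (rule image_eqI[rotated]) simp
    have "\<alpha> I' = - \<alpha> I" unfolding I'_def using \<alpha>_reflect \<alpha>_shift I(1) I1 by simp
    have "2 / 3 \<le> \<alpha> I * family_wave n \<I> \<alpha> \<theta>"
      using I \<alpha>_le \<alpha>_unit \<alpha>_shift by (intro family_wave_at_member_ge) auto
    moreover have "2 / 3 \<le> \<alpha> I' * family_wave n \<I> \<alpha> (-\<theta>)"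
      using I' \<open>-\<theta> \<in> I'\<close> \<alpha>_le \<alpha>_unit \<alpha>_shift by (intro family_wave_at_member_ge) auto
    ultimately have "4 / 3 \<le> \<alpha> I * (family_wave n \<I> \<alpha> \<theta> - family_wave n \<I> \<alpha> (-\<theta>))"
      using \<open>\<alpha> I' = - \<alpha> I\<close> by (simp add: algebra_simps)
    also have "\<dots> \<le> \<bar>\<alpha> I * (family_wave n \<I> \<alpha> \<theta> - family_wave n \<I> \<alpha> (-\<theta>))\<bar>"
      by (rule abs_ge_self)
    also have "\<dots> = \<bar>family_wave n \<I> \<alpha> \<theta> - family_wave n \<I> \<alpha> (-\<theta>)\<bar>"
      using \<alpha>_unit I(1) by (simp add: abs_mult)
    finally show ?thesis unfolding abs_s_hat using mult_left_mono[OF _ less_imp_le[OF K]] by fastforce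
  qed
  ultimately show ?thesis by blast
qed

lemma well_separated_imp_separated_arcs:
  assumes ws: "well_separated n t \<I>" and n: "n \<ge> 14"
  shows "separated_arcs n \<I>"
proof
  have su: "suitable n t \<I>" using ws by (simp add: well_separated_def)
  then show "finite \<I>" "\<And>J. J \<in> \<I> \<Longrightarrow> (\<lambda>\<theta>. pi + \<theta>) ` J \<in> \<I>" by (simp_all add: suitable_def)
  show "\<And>I J x y. I \<in> \<I> \<Longrightarrow> J \<in> \<I> \<Longrightarrow> I \<noteq> J \<Longrightarrow> x \<in> I \<Longrightarrow> y \<in> J \<Longrightarrow> pi / real n \<le> \<bar>x - y\<bar>"
    using ws by (simp add: well_separated_def)
  fix J assume J: "J \<in> \<I>"
  have "arc_endpoints_in n J" using su J by (simp add: suitable_def)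
  then obtain a b p q where ab: "a < b" "b - a < 2 * pi" "J = arc a b"
    "a = of_int p * pi / real n" "b = of_int q * pi / real n"
    unfolding arc_endpoints_in_def by auto
  have "arc_length_le (6 * pi / real n) J" using ws J by (simp add: well_separated_def)
  then obtain a' b' where ab': "a' < b'" "b' - a' < 2 * pi" "J = arc a' b'" "b' - a' \<le> 6 * pi / real n"
    unfolding arc_length_le_def by auto
  have "b' - a' = b - a" using arc_eq_imp_shift[OF ab(1,2) ab'(1,2)] ab(3) ab'(3) by auto
  moreover have "b - a = of_int (q - p) * pi / real n" using ab(4,5) by (simp add: algebra_simps diff_divide_distrib)
  ultimately show "\<exists>a b m. a < b \<and> b - a \<le> 6 * pi / real n \<and> J = arc a b \<and> b - a = of_int m * pi / real n"
    using ab ab' by (intro exI[of _ a] exI[of _ b] exI[of _ "q - p"]) auto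
qed (use n in simp)

theorem lemma5p6:
  shows "\<exists>N0::nat. \<forall>n\<ge>N0. \<forall>(t::int) (\<I>::real set set) (\<alpha>::real set \<Rightarrow> real).
     odd t \<and> 2 powr (-43) < gamma n t \<and> gamma n t \<le> 2 powr (-40) \<and>
     well_separated n t \<I> \<and> symmetric_colouring \<I> \<alpha> \<and>
     (\<forall>j\<in>S_o n. \<bar>eps_hat n \<I> \<alpha> j\<bar> \<le> 1)
     \<longrightarrow> (\<forall>\<theta>\<in>\<Union>\<I>. \<bar>s_hat n \<I> \<alpha> \<theta>\<bar> \<ge> 2 * K * sqrt (real n) / 3) \<and>
         (\<forall>\<theta>::real. \<bar>s_hat n \<I> \<alpha> \<theta>\<bar> \<le> 5 * K * sqrt (real n))"
proof (intro exI[of _ 14] allI impI)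
  fix n :: nat and t :: int and \<I> :: "real set set" and \<alpha> :: "real set \<Rightarrow> real"
  assume n: "n \<ge> 14" and "odd t \<and> 2 powr (-43) < gamma n t \<and> gamma n t \<le> 2 powr (-40) \<and>
     well_separated n t \<I> \<and> symmetric_colouring \<I> \<alpha> \<and> (\<forall>j\<in>S_o n. \<bar>eps_hat n \<I> \<alpha> j\<bar> \<le> 1)"
  then have ws: "well_separated n t \<I>" and \<alpha>: "symmetric_colouring \<I> \<alpha>" by auto
  have "\<forall>I\<in>\<I>. (\<lambda>\<theta>. pi - \<theta>) ` I \<in> \<I>"
    using ws by (simp add: well_separated_def suitable_def)
  then show "(\<forall>\<theta>\<in>\<Union>\<I>. \<bar>s_hat n \<I> \<alpha> \<theta>\<bar> \<ge> 2 * K * sqrt (real n) / 3) \<and>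
         (\<forall>\<theta>::real. \<bar>s_hat n \<I> \<alpha> \<theta>\<bar> \<le> 5 * K * sqrt (real n))"
    using separated_arcs.s_hat_bounds[OF well_separated_imp_separated_arcs[OF ws n] _ \<alpha>] by simp
qed

end
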